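(* Let $\mu$ be a classification problem, let $f^*$ be its Bayes regressor and $r^*_a:=f^*\sharp(\mu^X_a\times\{a\})$ for $a\in[m]$. Then the minimum of $\sum_{a\in[m]}\mathrm{Err}_a(h)$ over all randomized classifiers $h:\mathcal X\times\mathcal A\to\mathcal Y$ satisfying demographic parity exists and $$\min_{h:\ \text{DP holds}}\ \sum_{a\in[m]}\mathrm{Err}_a(h)=\frac12\min_{q\in\mathcal Q_k}\sum_{a\in[m]}W_1(r^*_a,q)=\frac12\min_{q\in\mathcal Q_k}\sum_{a\in[m]}\ \min_{\gamma_a\in\Gamma(r^*_a,q)}\int_{\Delta_k\times\mathcal Y}\|s-y\|_1\,d\gamma_a(s,y).$$
   Context: Setup. $\mathcal X$ is a standard Borel space, $k\ge 2$, $\mathcal Y=\{e_1,\dots,e_k\}\subset\mathbb R^k$ is the set of standard basis vectors (one-hot labels), and $\mathcal A=[m]=\{1,\dots,m\}$. A classification problem is a probability distribution $\mu$ of a triple $(X,Y,A)$ on $\mathcal X\times\mathcal Y\times\mathcal A$ with $\mathbb P(A=a)>0$ for every $a$; $\mu_a$ is $\mu$ conditioned on $A=a$ and $\mu^X_a$ is the law of $X$ under $\mu_a$. A randomized function $f:\mathcal U\to\mathcal V$ is given by a Markov kernel $K$ with $\mathbb P(f(u)\in B)=K(u,B)$; its internal randomness is independent of $(X,Y,A)$. The push-forward of a measure $p$ is $f\sharp p(B)=\int K(u,B)\,dp(u)$. A (randomized) classifier is a randomized function $h:\mathcal X\times\mathcal A\to\mathcal Y$, and $\mathrm{Err}_a(h):=\mathbb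 P(h(X,a)\neq Y\mid A=a)$, the probability being over $\mu$ and the randomness of $h$. $h$ satisfies demographic parity (DP) if $\mathbb P(h(X,a)=y\mid A=a)=\mathbb P(h(X,a')=y\mid A=a')$ for all $y\in\mathcal Y$, $a,a'\in\mathcal A$. $\Delta_k=\{x\in\mathbb R^k:x\ge0,\ \sum_i x_i=1\}$. The Bayes regressor is $f^*(x,a)=\mathbb E_\mu[Y\mid X=x,A=a]\in\Delta_k$ (the vector of conditional class probabilities), and $f^*\sharp(\mu^X_a\times\{a\})$ is the law of $f^*(X,a)$ for $X\sim\mu^X_a$. $\mathcal Q_k$ is the set of probability distributions supported on $\mathcal Y$. $\Gamma(p,q)$ is the set of couplings of $p$ and $q$, and $W_1(p,q)=\inf_{\gamma\in\Gamma(p,q)}\int\|s-s'\|_1\,d\gamma(s,s')$ is the Wasserstein-1 distance w.r.t. the $\ell_1$ metric on $\mathbb R^k$. *)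

theory Defs
  imports "HOL-Probability.Probability"
begin

definition labels :: "(real^'k) set" where
  "labels = range (\<lambda>i::'k. axis i 1)"

definition l1dist :: "(real^'k) \<Rightarrow> (real^'k) \<Rightarrow> real" where
  "l1dist s t = (\<Sum>i\<in>UNIV. \<bar>s $ i - t $ i\<bar>)"

definition triple_space :: "nat \<Rightarrow> ('x::topological_space \<times> (real^'k) \<times> nat) measure" where
  "triple_space m = borel \<Otimes>\<^sub>M count_space labels \<Otimes>\<^sub>M count_space {1..m}"

definition classification_problem ::
  "nat \<Rightarrow> ('x::topological_space \<times> (real^'k) \<times> nat) measure \<Rightarrow> bool" where
  "classification_problem m \<mu> \<longleftrightarrow>
     sets \<mu> = sets (triple_space m) \<and> prob_space \<mu> \<and>
     (\<forall>a\<in>{1..m}. measure \<mu> {\<omega>\<in>space \<mu>. snd (snd \<omega>) = a} > 0)"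

definition cond_measure ::
  "('x \<times> (real^'k) \<times> nat) measure \<Rightarrow> nat \<Rightarrow> ('x \<times> (real^'k) \<times> nat) measure" where
  "cond_measure \<mu> a = density \<mu>
     (\<lambda>\<omega>. ennreal (indicator {\<omega>. snd (snd \<omega>) = a} \<omega> / measure \<mu> {\<omega>\<in>space \<mu>. snd (snd \<omega>) = a}))"

definition X_law :: "('x::topological_space \<times> (real^'k) \<times> nat) measure \<Rightarrow> nat \<Rightarrow> 'x measure" where
  "X_law \<mu> a = distr (cond_measure \<mu> a) borel fst"

text \<open>A randomized classifier h : X x A -> Y, i.e. a Markov kernel into the finite set
  of labels, given by its point probabilities: h x a y = P(h(x,a) = y).\<close>
definition randomized_classifier :: "nat \<Rightarrow> ('x::topological_space \<Rightarrow> nat \<Rightarrow> (real^'k) \<Rightarrow> real) \<Rightarrow> bool" where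
  "randomized_classifier m h \<longleftrightarrow>
     (\<forall>a\<in>{1..m}. \<forall>y\<in>labels. (\<lambda>x. h x a y) \<in> borel_measurable borel) \<and>
     (\<forall>x. \<forall>a\<in>{1..m}. \<forall>y\<in>labels. h x a y \<ge> 0) \<and>
     (\<forall>x. \<forall>a\<in>{1..m}. (\<Sum>y\<in>labels. h x a y) = 1)"

text \<open>Err_a(h) = P(h(X,a) \<noteq> Y | A = a), with the internal randomness of h independent of (X,Y,A).\<close>
definition Err :: "('x \<times> (real^'k) \<times> nat) measure \<Rightarrow> ('x \<Rightarrow> nat \<Rightarrow> (real^'k) \<Rightarrow> real) \<Rightarrow> nat \<Rightarrow> real" where
  "Err \<mu> h a = integral\<^sup>L (cond_measure \<mu> a) (\<lambda>(x, y, _). \<Sum>y'\<in>labels - {y}. h x a y')"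

definition pred_prob :: "('x \<times> (real^'k) \<times> nat) measure \<Rightarrow> ('x \<Rightarrow> nat \<Rightarrow> (real^'k) \<Rightarrow> real) \<Rightarrow> nat \<Rightarrow> (real^'k) \<Rightarrow> real" where
  "pred_prob \<mu> h a y = integral\<^sup>L (cond_measure \<mu> a) (\<lambda>(x, _, _). h x a y)"

definition demographic_parity :: "nat \<Rightarrow> ('x \<times> (real^'k) \<times> nat) measure \<Rightarrow> ('x \<Rightarrow> nat \<Rightarrow> (real^'k) \<Rightarrow> real) \<Rightarrow> bool" where
  "demographic_parity m \<mu> h \<longleftrightarrow>
     (\<forall>y\<in>labels. \<forall>a\<in>{1..m}. \<forall>a'\<in>{1..m}. pred_prob \<mu> h a y = pred_prob \<mu> h a' y)"

definition bayes_regressor :: "nat \<Rightarrow> ('x::topological_space \<times> (real^'k) \<times> nat) measure \<Rightarrow> ('x \<Rightarrow> nat \<Rightarrow> (real^'k)) \<Rightarrow> bool" where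
  "bayes_regressor m \<mu> f \<longleftrightarrow>
     (\<lambda>(x, a). f x a) \<in> borel_measurable (borel \<Otimes>\<^sub>M count_space {1..m}) \<and>
     integrable \<mu> (\<lambda>(x, y, a). f x a) \<and>
     (\<forall>C\<in>sets (borel \<Otimes>\<^sub>M count_space {1..m}).
        integral\<^sup>L \<mu> (\<lambda>(x, y, a). indicator C (x, a) *\<^sub>R y) =
        integral\<^sup>L \<mu> (\<lambda>(x, y, a). indicator C (x, a) *\<^sub>R f x a))"

definition Qk :: "(real^'k) measure set" where
  "Qk = {q. sets q = sets (borel :: (real^'k) measure) \<and> prob_space q \<and> measure q labels = 1}"

definition couplings :: "(real^'k) measure \<Rightarrow> (real^'k) measure \<Rightarrow> ((real^'k) \<times> (real^'k)) measure set" where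
  "couplings p q = {\<gamma>. sets \<gamma> = sets (borel :: ((real^'k) \<times> (real^'k)) measure) \<and> prob_space \<gamma> \<and>
                        distr \<gamma> borel fst = p \<and> distr \<gamma> borel snd = q}"

definition transport_cost :: "((real^'k) \<times> (real^'k)) measure \<Rightarrow> real" where
  "transport_cost \<gamma> = integral\<^sup>L \<gamma> (\<lambda>(s, t). l1dist s t)"

definition W1 :: "(real^'k) measure \<Rightarrow> (real^'k) measure \<Rightarrow> real" where
  "W1 p q = (INF \<gamma>\<in>couplings p q. transport_cost \<gamma>)"

definition is_min :: "real set \<Rightarrow> real \<Rightarrow> bool" where
  "is_min S v \<longleftrightarrow> v \<in> S \<and> (\<forall>s\<in>S. v \<le> s)"

end

theory Submission
  imports Defs
begin

text \<open>Fix a group \<open>a\<close> and write \<open>s = f\<^sup>*(X, a)\<close>. A classifier for the group is a stochastic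
  kernel \<open>H\<close> from \<open>X\<close> to labels; its accuracy is \<open>E[\<Sum>\<^sub>i H(X, i) s\<^sub>i]\<close> and its prediction has some
  law \<open>q\<close>. The best accuracy for a prescribed \<open>q\<close> is the value \<open>g\<^sub>a(q)\<close> of an assignment problem, whose
  dual is \<open>min\<^sub>\<psi> \<langle>q, \<psi>\<rangle> + E[max\<^sub>j (s\<^sub>j - \<psi>\<^sub>j)]\<close>. A minimising price \<open>\<psi>\<close> exists because prices can be
  normalised into the unit cube; its first-order condition and a separating hyperplane put \<open>q\<close> in
  the convex hull of the laws of the labels selected among the maximisers of \<open>s\<^sub>j - \<psi>\<^sub>j\<close>, and the
  corresponding mixture of selections is a kernel attaining the dual value: strong duality.

  Since \<open>\<parallel>s - e\<^sub>j\<parallel>\<^sub>1 = 2 - 2 s\<^sub>j\<close> on the simplex, a coupling of \<open>r\<^sub>a\<close> with a law \<open>q\<close> on the labels is the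
  same thing as such a kernel, with cost \<open>2 - 2 \<times> accuracy\<close>; hence \<open>W\<^sub>1(r\<^sub>a, q) = 2 - 2 g\<^sub>a(q)\<close>,
  and \<open>Err\<^sub>a = 1 - accuracy\<close> because \<open>f\<^sup>*\<close> is the Bayes regressor. Demographic parity says that all
  groups share the same \<open>q\<close>, so both minima equal \<open>m - max\<^sub>q \<Sum>\<^sub>a g\<^sub>a(q)\<close> up to the factor \<open>2\<close>; the
  maximum exists since every \<open>g\<^sub>a\<close> is Lipschitz on the compact simplex.\<close>

section \<open>The probability simplex and the maximal excess\<close>

definition prob_simplex :: "(real^'k) set" where
  "prob_simplex = {x. (\<forall>i. 0 \<le> x$i) \<and> (\<Sum>i\<in>UNIV. x$i) = 1}"

lemma prob_simplex_nth_le_1: "s \<in> prob_simplex \<Longrightarrow> s$i \<le> 1"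
  using member_le_sum[of i UNIV "\<lambda>i. s$i"] by (auto simp: prob_simplex_def)

lemma abs_prob_simplex_nth_le_1: "s \<in> prob_simplex \<Longrightarrow> \<bar>s$i\<bar> \<le> 1"
  using prob_simplex_nth_le_1[of s i] by (auto simp: prob_simplex_def)

lemma uniform_in_prob_simplex: "(\<chi> i. 1 / real CARD('k)) \<in> (prob_simplex :: (real^'k) set)"
  by (simp add: prob_simplex_def)

lemma compact_prob_simplex: "compact (prob_simplex :: (real^'k) set)"
proof -
  have "prob_simplex = {x::real^'k. \<forall>i. 0 \<le> x$i} \<inter> {x. (\<Sum>i\<in>UNIV. x$i) = 1}"
    by (auto simp: prob_simplex_def)
  moreover have "closed {x::real^'k. \<forall>i. 0 \<le> x$i}"
    by (simp only: Collect_all_eq) (intro closed_INT ballI closed_Collect_le continuous_intros)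
  moreover have "closed {x::real^'k. (\<Sum>i\<in>UNIV. x$i) = 1}"
    by (intro closed_Collect_eq continuous_intros)
  moreover have "prob_simplex \<subseteq> cbox (0::real^'k) 1"
  proof
    fix x :: "real^'k" assume "x \<in> prob_simplex"
    then show "x \<in> cbox 0 1" using prob_simplex_nth_le_1[of x] by (auto simp: mem_box_cart prob_simplex_def)
  qed
  ultimately show ?thesis
    by (metis bounded_cbox bounded_subset closed_Int compact_eq_bounded_closed)
qed

lemma prob_simplex_borel: "prob_simplex \<in> sets (borel :: (real^'k) measure)"
  by (rule borel_closed[OF compact_imp_closed[OF compact_prob_simplex]])

lemma sum_abs_le_card_norm: "(\<Sum>i\<in>UNIV. \<bar>v$i\<bar>) \<le> real CARD('k) * norm (v::real^'k)"
proof -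
  have "(\<Sum>i\<in>UNIV. \<bar>v$i\<bar>) \<le> (\<Sum>i\<in>(UNIV::'k set). norm v)"
    by (intro sum_mono) (simp add: component_le_norm_cart)
  then show ?thesis by simp
qed

lemma l1_lipschitz_imp_continuous_on:
  fixes F :: "real^'k \<Rightarrow> real"
  assumes "\<And>q q'. q \<in> S \<Longrightarrow> q' \<in> S \<Longrightarrow> \<bar>F q - F q'\<bar> \<le> C * (\<Sum>i\<in>UNIV. \<bar>q$i - q'$i\<bar>)"
    and "0 \<le> C"
  shows "continuous_on S F"
proof (rule lipschitz_on_continuous_on)
  show "(C * real CARD('k))-lipschitz_on S F"
  proof (rule lipschitz_onI)
    fix q q' assume "q \<in> S" "q' \<in> S"
    then have "dist (F q) (F q') \<le> C * (\<Sum>i\<in>UNIV. \<bar>(q - q')$i\<bar>)"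
      using assms(1) by (simp add: dist_real_def)
    also have "\<dots> \<le> C * real CARD('k) * dist q q'"
      using mult_left_mono[OF sum_abs_le_card_norm[of "q - q'"] assms(2)] by (simp add: dist_norm)
    finally show "dist (F q) (F q') \<le> C * real CARD('k) * dist q q'" .
  qed (use assms(2) in simp)
qed

lemma borel_measurable_vec_nth[measurable (raw)]:
  "f \<in> borel_measurable M \<Longrightarrow> (\<lambda>x. f x $ i :: real) \<in> borel_measurable M"
  using measurable_compose[OF _ borel_measurable_nth] by blast

lemma l1dist_axis:
  assumes "t \<in> prob_simplex"
  shows "l1dist t (axis j 1) = 2 - 2 * t$j"
proof -
  have "\<bar>t$i - axis j 1 $ i\<bar> = t$i + axis j 1 $ i - 2 * (t$i * axis j 1 $ i)" for i
    using assms prob_simplex_nth_le_1[OF assms, of i] by (auto simp: axis_def prob_simplex_def)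
  then have "l1dist t (axis j 1) = (\<Sum>i\<in>UNIV. t$i + axis j 1 $ i - 2 * (t$i * axis j 1 $ i))"
    by (simp add: l1dist_def)
  also have "\<dots> = (\<Sum>i\<in>UNIV. t$i) + (\<Sum>i\<in>UNIV. axis j 1 $ i) - 2 * (\<Sum>i\<in>UNIV. t$i * axis j 1 $ i)"
    by (simp add: sum.distrib sum_subtractf sum_distrib_left)
  also have "\<dots> = 2 - 2 * t$j"
    using assms by (simp add: prob_simplex_def axis_def if_distrib cong: if_cong)
  finally show ?thesis .
qed

lemma abs_Max_range_diff_le:
  fixes a b :: "'k::finite \<Rightarrow> real"
  assumes "\<And>j. \<bar>a j - b j\<bar> \<le> c"
  shows "\<bar>Max (range a) - Max (range b)\<bar> \<le> c"
proof -
  obtain j where j: "a j = Max (range a)" using Max_in[of "range a"] by fastforce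
  obtain l where l: "b l = Max (range b)" using Max_in[of "range b"] by fastforce
  have "b j \<le> Max (range b)" "a l \<le> Max (range a)" by auto
  then show ?thesis using assms[of j] assms[of l] j l unfolding abs_le_iff by linarith
qed

lemma exists_gap_below_Max:
  fixes a :: "'k::finite \<Rightarrow> real"
  obtains \<delta> where "\<delta> > 0" "\<And>j. a j \<noteq> Max (range a) \<Longrightarrow> a j \<le> Max (range a) - \<delta>"
proof (cases "\<exists>j. a j \<noteq> Max (range a)")
  case False
  show ?thesis
  proof (rule that[of 1])
    fix j assume "a j \<noteq> Max (range a)"
    with False show "a j \<le> Max (range a) - 1" by blast
  qed simp
next
  case True
  define N where "N = {j. a j \<noteq> Max (range a)}"
  have "N \<noteq> {}" using True by (simp add: N_def)
  then obtain j0 where j0: "j0 \<in> N" "a j0 = Max (a ` N)"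
    using Max_in[of "a ` N"] by fastforce
  have "a j0 < Max (range a)" using j0(1) Max_ge[of "range a" "a j0"] by (simp add: N_def less_le)
  moreover have "a j \<le> a j0" if "j \<in> N" for j
    using that j0(2) Max_ge[of "a ` N" "a j"] by simp
  ultimately show ?thesis
    by (intro that[of "Max (range a) - a j0"]) (simp_all add: N_def)
qed

lemma Max_range_minus_scaled:
  fixes a d :: "'k::finite \<Rightarrow> real"
  shows "\<exists>\<epsilon>>0. \<forall>t. 0 < t \<and> t < \<epsilon> \<longrightarrow>
     Max (range (\<lambda>j. a j - t * d j)) = Max (range a) - t * Min (d ` {i. a i = Max (range a)})"
proof -
  define M where "M = Max (range a)"
  define T where "T = {i. a i = M}"
  define B where "B = (\<Sum>i\<in>UNIV. \<bar>d i\<bar>) + 1"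
  have B: "\<bar>d i\<bar> < B" for i using member_le_sum[of i UNIV "\<lambda>i. \<bar>d i\<bar>"] by (auto simp: B_def)
  have "T \<noteq> {}" unfolding T_def M_def using Max_in[of "range a"] by fastforce
  then obtain i0 where i0: "i0 \<in> T" "d i0 = Min (d ` T)" using Min_in[of "d ` T"] by fastforce
  obtain \<delta> where \<delta>: "\<delta> > 0" "\<And>j. a j \<noteq> M \<Longrightarrow> a j \<le> M - \<delta>"
    using exists_gap_below_Max[of a, folded M_def] by blast
  have "B > 0" using B[of undefined] by linarith
  have "Max (range (\<lambda>j. a j - t * d j)) = M - t * Min (d ` T)" if t: "0 < t" "t < \<delta> / (2 * B)" for t
  proof (rule Max_eqI)
    have "a i0 = M" "d i0 = Min (d ` T)" using i0 by (simp_all add: T_def)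
    then show "M - t * Min (d ` T) \<in> range (\<lambda>j. a j - t * d j)"
      by (intro range_eqI[of _ _ i0]) simp
    have "t * (2 * B) < \<delta>" using t(2) \<open>B > 0\<close> by (simp add: pos_less_divide_eq)
    then have tB: "t * B < \<delta> / 2" by (simp add: algebra_simps)
    have tdB: "\<bar>t * d j\<bar> \<le> t * B" for j
    proof -
      have "\<bar>t * d j\<bar> = t * \<bar>d j\<bar>" using t(1) by (simp add: abs_mult)
      also have "\<dots> \<le> t * B" using B[of j] t(1) by (intro mult_left_mono) auto
      finally show ?thesis .
    qed
    fix y assume "y \<in> range (\<lambda>j. a j - t * d j)"
    then obtain j where y: "y = a j - t * d j" by auto
    show "y \<le> M - t * Min (d ` T)"
    proof (cases "j \<in> T")
      case True
      then have "Min (d ` T) \<le> d j" by (intro Min_le) auto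
      then have "t * Min (d ` T) \<le> t * d j" using t(1) by (intro mult_left_mono) auto
      then show ?thesis using True y by (simp add: T_def)
    next
      case False
      then have "a j \<le> M - \<delta>" using \<delta>(2) by (simp add: T_def)
      moreover have "- t * d j \<le> t * B" using tdB[of j] by linarith
      moreover have "t * Min (d ` T) \<le> t * B" using tdB[of i0] i0(2) abs_ge_self[of "t * d i0"] by simp
      ultimately show ?thesis using y tB by linarith
    qed
  qed simp
  moreover have "\<delta> / (2 * B) > 0" using \<delta>(1) \<open>B > 0\<close> by simp
  ultimately show ?thesis unfolding M_def T_def by blast
qed

text \<open>For \<open>s\<close> in the simplex, \<open>max_excess \<psi> s\<close> is the pointwise term of the dual of the
  assignment problem: the labels are \<open>e\<^sub>1, \<dots>, e\<^sub>k\<close>, \<open>\<psi>\<close> is a price on them, and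
  \<open>\<langle>\<psi>, e\<^sub>j\<rangle> + max_excess \<psi> s \<ge> s$j\<close> for every \<open>j\<close>.\<close>
definition max_excess :: "real^'k \<Rightarrow> real^'k \<Rightarrow> real" where
  "max_excess \<psi> s = Max (range (\<lambda>j. s$j - \<psi>$j))"

definition argmax_excess :: "real^'k \<Rightarrow> real^'k \<Rightarrow> 'k set" where
  "argmax_excess \<psi> t = {i. t$i - \<psi>$i = max_excess \<psi> t}"

lemma max_excess_ge: "s$j - \<psi>$j \<le> max_excess \<psi> s"
  by (auto simp: max_excess_def)

lemma argmax_excess_nonempty: "argmax_excess \<psi> t \<noteq> {}"
  unfolding argmax_excess_def max_excess_def using Max_in[of "range (\<lambda>j. t$j - \<psi>$j)"] by fastforce

lemma borel_measurable_max_excess[measurable]: "max_excess \<psi> \<in> borel_measurable borel"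
  unfolding max_excess_def by measurable

lemma max_excess_lipschitz: "\<bar>max_excess \<psi> s - max_excess \<psi>' s\<bar> \<le> (\<Sum>i\<in>UNIV. \<bar>\<psi>$i - \<psi>'$i\<bar>)"
  unfolding max_excess_def
proof (rule abs_Max_range_diff_le)
  fix j
  have "\<bar>\<psi>$j - \<psi>'$j\<bar> \<le> (\<Sum>i\<in>UNIV. \<bar>\<psi>$i - \<psi>'$i\<bar>)" by (rule member_le_sum) auto
  then show "\<bar>s$j - \<psi>$j - (s$j - \<psi>'$j)\<bar> \<le> (\<Sum>i\<in>UNIV. \<bar>\<psi>$i - \<psi>'$i\<bar>)"
    by (simp add: abs_minus_commute)
qed

lemma abs_max_excess_le: "s \<in> prob_simplex \<Longrightarrow> \<bar>max_excess \<psi> s\<bar> \<le> 1 + (\<Sum>i\<in>UNIV. \<bar>\<psi>$i\<bar>)"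
proof -
  assume s: "s \<in> prob_simplex"
  obtain j where "max_excess 0 s = s$j"
    unfolding max_excess_def using Max_in[of "range (\<lambda>j. s$j - 0$j)"] by fastforce
  then have "\<bar>max_excess 0 s\<bar> \<le> 1" using s prob_simplex_nth_le_1[OF s, of j] by (auto simp: prob_simplex_def)
  then show ?thesis using max_excess_lipschitz[of \<psi> s 0] by simp
qed

lemma max_excess_perturb:
  "\<exists>\<epsilon>>0. \<forall>t. 0 < t \<and> t < \<epsilon> \<longrightarrow>
     max_excess (\<psi> + t *\<^sub>R d) s = max_excess \<psi> s - t * Min ((\<lambda>i. d$i) ` argmax_excess \<psi> s)"
  using Max_range_minus_scaled[of "\<lambda>j. s$j - \<psi>$j" "\<lambda>j. d$j"]
  by (simp add: max_excess_def argmax_excess_def algebra_simps)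

lemma max_excess_difference_quotient:
  "(\<lambda>n. (max_excess (\<psi> + (1 / Suc n) *\<^sub>R d) t - max_excess \<psi> t) / (1 / Suc n))
     \<longlonglongrightarrow> - Min ((\<lambda>i. d$i) ` argmax_excess \<psi> t)"
proof (rule tendsto_eventually)
  obtain \<epsilon> where "\<epsilon> > 0" and \<epsilon>: "\<And>\<tau>. 0 < \<tau> \<Longrightarrow> \<tau> < \<epsilon> \<Longrightarrow>
      max_excess (\<psi> + \<tau> *\<^sub>R d) t = max_excess \<psi> t - \<tau> * Min ((\<lambda>i. d$i) ` argmax_excess \<psi> t)"
    using max_excess_perturb by blast
  have "(\<lambda>n. 1 / Suc n) \<longlonglongrightarrow> 0"
    using LIMSEQ_inverse_real_of_nat by (simp add: inverse_eq_divide)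
  then have "eventually (\<lambda>n. 1 / Suc n < \<epsilon>) sequentially"
    using \<open>\<epsilon> > 0\<close> by (rule order_tendstoD)
  then show "eventually (\<lambda>n. (max_excess (\<psi> + (1 / Suc n) *\<^sub>R d) t - max_excess \<psi> t) / (1 / Suc n) =
      - Min ((\<lambda>i. d$i) ` argmax_excess \<psi> t)) sequentially"
    by eventually_elim (simp add: \<epsilon>)
qed

text \<open>Shifting all prices by a constant shifts \<open>max_excess\<close> by the same constant. Capping the
  shifted prices at \<open>1\<close> changes nothing: a capped coordinate has excess at most \<open>1 - 1 = 0\<close>, while
  the coordinate of the minimal price has excess at least \<open>0\<close>.\<close>
lemma max_excess_normalize:
  fixes \<psi> :: "real^'k"
  defines "c \<equiv> Min (range (\<lambda>i. \<psi>$i))"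
  assumes "t \<in> prob_simplex"
  shows "max_excess (\<chi> i. min 1 (\<psi>$i - c)) t = max_excess \<psi> t + c"
proof -
  define \<psi>' :: "real^'k" where "\<psi>' = (\<chi> i. min 1 (\<psi>$i - c))"
  obtain j0 where j0: "\<psi>$j0 = c" unfolding c_def using Min_in[of "range (\<lambda>i. \<psi>$i)"] by fastforce
  have t: "0 \<le> t$i" "t$i \<le> 1" for i using assms(2) prob_simplex_nth_le_1 by (auto simp: prob_simplex_def)
  obtain j1 where j1: "max_excess \<psi> t = t$j1 - \<psi>$j1"
    unfolding max_excess_def using Max_in[of "range (\<lambda>j. t$j - \<psi>$j)"] by fastforce
  obtain j2 where j2: "max_excess \<psi>' t = t$j2 - \<psi>'$j2"
    unfolding max_excess_def using Max_in[of "range (\<lambda>j. t$j - \<psi>'$j)"] by fastforce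
  have b0: "\<psi>'$j0 = 0" using j0 by (simp add: \<psi>'_def)
  have "max_excess \<psi> t + c \<le> max_excess \<psi>' t"
  proof (cases "\<psi>$j1 - c \<le> 1")
    case True
    then have "\<psi>'$j1 = \<psi>$j1 - c" by (simp add: \<psi>'_def)
    then show ?thesis using j1 max_excess_ge[of t j1 \<psi>'] by linarith
  next
    case False
    then have "\<psi>'$j1 = 1" by (simp add: \<psi>'_def)
    then show ?thesis using j1 False t(1)[of j0] max_excess_ge[of t j0 \<psi>'] b0 t(2)[of j1] by linarith
  qed
  moreover have "max_excess \<psi>' t \<le> max_excess \<psi> t + c"
  proof (cases "\<psi>$j2 - c \<le> 1")
    case True
    then have "\<psi>'$j2 = \<psi>$j2 - c" by (simp add: \<psi>'_def)
    then show ?thesis using j2 max_excess_ge[of t j2 \<psi>] by linarith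
  next
    case False
    then have "\<psi>'$j2 = 1" by (simp add: \<psi>'_def)
    then show ?thesis using j2 max_excess_ge[of t j0 \<psi>] j0 t(1)[of j2] t(1)[of j0] t(2)[of j2] by linarith
  qed
  ultimately show ?thesis by (simp add: \<psi>'_def)
qed

section \<open>An assignment problem and its dual\<close>

text \<open>Maximising the gain over kernels with a
  prescribed label law \<open>q\<close> is a linear programme whose dual variable is a price vector \<open>\<psi>\<close>.\<close>

definition stochastic_kernel :: "'x measure \<Rightarrow> ('x \<Rightarrow> 'k::finite \<Rightarrow> real) \<Rightarrow> bool" where
  "stochastic_kernel P H \<longleftrightarrow>
     (\<forall>i. (\<lambda>x. H x i) \<in> borel_measurable P) \<and> (\<forall>x i. 0 \<le> H x i) \<and> (\<forall>x. (\<Sum>i\<in>UNIV. H x i) = 1)"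

definition kernel_marginal :: "'x measure \<Rightarrow> ('x \<Rightarrow> 'k::finite \<Rightarrow> real) \<Rightarrow> real^'k" where
  "kernel_marginal P H = (\<chi> i. \<integral>x. H x i \<partial>P)"

definition kernel_gain :: "'x measure \<Rightarrow> ('x \<Rightarrow> real^'k) \<Rightarrow> ('x \<Rightarrow> 'k \<Rightarrow> real) \<Rightarrow> real" where
  "kernel_gain P s H = (\<integral>x. (\<Sum>i\<in>UNIV. H x i * s x $ i) \<partial>P)"

definition dual_objective :: "'x measure \<Rightarrow> ('x \<Rightarrow> real^'k) \<Rightarrow> real^'k \<Rightarrow> real^'k \<Rightarrow> real" where
  "dual_objective P s q \<psi> = inner q \<psi> + (\<integral>x. max_excess \<psi> (s x) \<partial>P)"

definition dual_value :: "'x measure \<Rightarrow> ('x \<Rightarrow> real^'k) \<Rightarrow> real^'k \<Rightarrow> real" where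
  "dual_value P s q = (INF \<psi>. dual_objective P s q \<psi>)"

definition selectors :: "('k set \<Rightarrow> 'k) set" where
  "selectors = {\<sigma>. \<forall>S. S \<noteq> {} \<longrightarrow> \<sigma> S \<in> S}"

definition selector_marginal :: "'x measure \<Rightarrow> ('x \<Rightarrow> real^'k) \<Rightarrow> real^'k \<Rightarrow> ('k set \<Rightarrow> 'k) \<Rightarrow> real^'k" where
  "selector_marginal P s \<psi> \<sigma> = (\<chi> i. measure P {x\<in>space P. \<sigma> (argmax_excess \<psi> (s x)) = i})"

lemma stochastic_kernel_le_1: "stochastic_kernel P H \<Longrightarrow> H x i \<le> 1"
  unfolding stochastic_kernel_def using member_le_sum[of i UNIV "H x"] by auto

lemma sum_indicator_eq: "(\<Sum>j\<in>UNIV. (if j = i then 1 else 0) * c j) = (c i :: real)"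
  for i :: "'a::finite"
proof -
  have "(\<Sum>j\<in>UNIV. (if j = i then 1 else 0) * c j) = (\<Sum>j\<in>UNIV. if j = i then c j else 0)"
    by (intro sum.cong) auto
  then show ?thesis by simp
qed

lemma weighted_score_le_max_excess:
  fixes w :: "'k::finite \<Rightarrow> real"
  assumes "\<And>i. 0 \<le> w i" "(\<Sum>i\<in>UNIV. w i) = 1"
  shows "(\<Sum>i\<in>UNIV. w i * t$i) \<le> max_excess \<psi> t + (\<Sum>i\<in>UNIV. w i * \<psi>$i)"
    and "(\<And>i. w i \<noteq> 0 \<Longrightarrow> i \<in> argmax_excess \<psi> t) \<Longrightarrow>
      (\<Sum>i\<in>UNIV. w i * t$i) = max_excess \<psi> t + (\<Sum>i\<in>UNIV. w i * \<psi>$i)"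
proof -
  have split: "(\<Sum>i\<in>UNIV. w i * t$i) = (\<Sum>i\<in>UNIV. w i * (t$i - \<psi>$i)) + (\<Sum>i\<in>UNIV. w i * \<psi>$i)"
    by (simp add: algebra_simps sum.distrib[symmetric])
  have "(\<Sum>i\<in>UNIV. w i * (t$i - \<psi>$i)) \<le> (\<Sum>i\<in>UNIV. w i * max_excess \<psi> t)"
    using assms(1) by (intro sum_mono mult_left_mono max_excess_ge)
  then show "(\<Sum>i\<in>UNIV. w i * t$i) \<le> max_excess \<psi> t + (\<Sum>i\<in>UNIV. w i * \<psi>$i)"
    using split assms(2) by (simp add: sum_distrib_right[symmetric])
  assume "\<And>i. w i \<noteq> 0 \<Longrightarrow> i \<in> argmax_excess \<psi> t"
  then have "(\<Sum>i\<in>UNIV. w i * (t$i - \<psi>$i)) = (\<Sum>i\<in>UNIV. w i * max_excess \<psi> t)"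
    by (intro sum.cong refl) (force simp: argmax_excess_def)
  then show "(\<Sum>i\<in>UNIV. w i * t$i) = max_excess \<psi> t + (\<Sum>i\<in>UNIV. w i * \<psi>$i)"
    using split assms(2) by (simp add: sum_distrib_right[symmetric])
qed

locale simplex_rv = prob_space P for P :: "'x measure" +
  fixes s :: "'x \<Rightarrow> real^'k"
  assumes measurable_s[measurable]: "s \<in> borel_measurable P"
    and AE_in_prob_simplex: "AE x in P. s x \<in> prob_simplex"
begin

lemma integrable_max_excess: "integrable P (\<lambda>x. max_excess \<psi> (s x))"
  by (rule integrable_const_bound[where B="1 + (\<Sum>i\<in>UNIV. \<bar>\<psi>$i\<bar>)"]) (use AE_in_prob_simplex abs_max_excess_le in auto)

lemma measurable_argmax_excess[measurable]:
  "(\<lambda>x. argmax_excess \<psi> (s x)) \<in> measurable P (count_space UNIV)"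
proof (subst measurable_count_space_eq2_countable, intro conjI ballI)
  fix S :: "'k set"
  have "(\<lambda>x. argmax_excess \<psi> (s x)) -` {S} \<inter> space P =
        {x\<in>space P. \<forall>i. (i \<in> S) = (s x $ i - \<psi>$i = max_excess \<psi> (s x))}"
    by (auto simp: argmax_excess_def)
  also have "\<dots> \<in> sets P" by measurable
  finally show "(\<lambda>x. argmax_excess \<psi> (s x)) -` {S} \<inter> space P \<in> sets P" .
qed auto

lemma integral_finite_valued:
  fixes g :: "'x \<Rightarrow> 'k" and c :: "'k \<Rightarrow> real"
  assumes [measurable]: "g \<in> measurable P (count_space UNIV)"
  shows "(\<integral>x. c (g x) \<partial>P) = (\<Sum>i\<in>UNIV. c i * measure P {x\<in>space P. g x = i})"
proof -
  have "(\<integral>x. c (g x) \<partial>P) = (\<integral>x. (\<Sum>i\<in>UNIV. c i * indicator {x\<in>space P. g x = i} x) \<partial>P)"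
    by (intro Bochner_Integration.integral_cong) (auto simp: indicator_def if_distrib cong: if_cong)
  also have "\<dots> = (\<Sum>i\<in>UNIV. c i * measure P {x\<in>space P. g x = i})"
  proof -
    have "integrable P (indicator {x\<in>space P. g x = i} :: 'x \<Rightarrow> real)" for i
      by (intro integrable_real_indicator) (simp_all add: less_top[symmetric])
    then show ?thesis by (subst Bochner_Integration.integral_sum) auto
  qed
  finally show ?thesis .
qed

lemma integrable_kernel:
  assumes "stochastic_kernel P H"
  shows "integrable P (\<lambda>x. H x i)" "integrable P (\<lambda>x. H x i * s x $ i)"
proof -
  have [measurable]: "(\<lambda>x. H x i) \<in> borel_measurable P"
    using assms by (simp add: stochastic_kernel_def)
  have H: "\<bar>H x i\<bar> \<le> 1" for x
    using assms stochastic_kernel_le_1[OF assms] by (auto simp: stochastic_kernel_def)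
  show "integrable P (\<lambda>x. H x i)"
    by (rule integrable_const_bound[where B=1]) (use H in auto)
  show "integrable P (\<lambda>x. H x i * s x $ i)"
  proof (rule integrable_const_bound[where B=1])
    show "AE x in P. norm (H x i * s x $ i) \<le> 1"
      using AE_in_prob_simplex
    proof eventually_elim
      case (elim x)
      then show ?case using H[of x] abs_prob_simplex_nth_le_1[OF elim, of i]
        by (simp add: abs_mult mult_le_one)
    qed
  qed measurable
qed

lemma kernel_marginal_in_prob_simplex:
  fixes H :: "'x \<Rightarrow> 'k \<Rightarrow> real"
  assumes "stochastic_kernel P H"
  shows "kernel_marginal P H \<in> prob_simplex"
proof -
  have "(\<Sum>i\<in>UNIV. \<integral>x. H x i \<partial>P) = (\<integral>x. (\<Sum>i\<in>UNIV. H x i) \<partial>P)"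
    by (subst Bochner_Integration.integral_sum) (auto intro: integrable_kernel[OF assms])
  also have "\<dots> = 1" using assms by (simp add: stochastic_kernel_def prob_space)
  moreover have "0 \<le> (\<integral>x. H x i \<partial>P)" for i
    using assms by (intro integral_nonneg_AE) (auto simp: stochastic_kernel_def)
  ultimately show ?thesis by (simp add: prob_simplex_def kernel_marginal_def)
qed

lemma kernel_gain_le_dual_objective:
  fixes H :: "'x \<Rightarrow> 'k \<Rightarrow> real"
  assumes H: "stochastic_kernel P H"
  shows "kernel_gain P s H \<le> dual_objective P s (kernel_marginal P H) \<psi>"
    and "(\<And>x i. H x i \<noteq> 0 \<Longrightarrow> i \<in> argmax_excess \<psi> (s x)) \<Longrightarrow>
      kernel_gain P s H = dual_objective P s (kernel_marginal P H) \<psi>"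
proof -
  have row: "\<And>i. 0 \<le> H x i" "(\<Sum>i\<in>UNIV. H x i) = 1" for x
    using H by (simp_all add: stochastic_kernel_def)
  have [measurable]: "(\<lambda>x. H x i) \<in> borel_measurable P" for i
    using H by (simp add: stochastic_kernel_def)
  have integrable: "integrable P (\<lambda>x. max_excess \<psi> (s x) + (\<Sum>i\<in>UNIV. H x i * \<psi>$i))"
    by (intro Bochner_Integration.integrable_add Bochner_Integration.integrable_sum
        integrable_mult_left integrable_kernel(1)[OF H] integrable_max_excess)
  have dual: "(\<integral>x. max_excess \<psi> (s x) + (\<Sum>i\<in>UNIV. H x i * \<psi>$i) \<partial>P) =
      dual_objective P s (kernel_marginal P H) \<psi>"
    using integrable_max_excess integrable_kernel(1)[OF H]
    by (simp add: dual_objective_def kernel_marginal_def inner_vec_def add.commute)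
  have gain: "integrable P (\<lambda>x. \<Sum>i\<in>UNIV. H x i * s x $ i)"
    by (intro Bochner_Integration.integrable_sum integrable_kernel(2)[OF H])
  show "kernel_gain P s H \<le> dual_objective P s (kernel_marginal P H) \<psi>"
    unfolding kernel_gain_def dual[symmetric]
    by (intro integral_mono gain integrable weighted_score_le_max_excess(1) row)
  show "kernel_gain P s H = dual_objective P s (kernel_marginal P H) \<psi>"
    if "\<And>x i. H x i \<noteq> 0 \<Longrightarrow> i \<in> argmax_excess \<psi> (s x)"
    unfolding kernel_gain_def dual[symmetric]
    by (intro Bochner_Integration.integral_cong refl weighted_score_le_max_excess(2) row that)
qed

lemma dual_objective_lipschitz:
  assumes q: "q \<in> prob_simplex"
  shows "\<bar>dual_objective P s q \<psi> - dual_objective P s q \<psi>'\<bar> \<le> 2 * (\<Sum>i\<in>UNIV. \<bar>\<psi>$i - \<psi>'$i\<bar>)"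
proof -
  have "\<bar>inner q \<psi> - inner q \<psi>'\<bar> \<le> (\<Sum>i\<in>UNIV. \<bar>q$i * (\<psi>$i - \<psi>'$i)\<bar>)"
    using sum_abs[of "\<lambda>i. q$i * (\<psi>$i - \<psi>'$i)" UNIV]
    by (simp add: inner_vec_def sum_subtractf right_diff_distrib)
  also have "\<dots> \<le> (\<Sum>i\<in>UNIV. \<bar>\<psi>$i - \<psi>'$i\<bar>)"
  proof (intro sum_mono)
    fix i
    have "0 \<le> q$i" "q$i \<le> 1" using q prob_simplex_nth_le_1[OF q] by (auto simp: prob_simplex_def)
    then show "\<bar>q$i * (\<psi>$i - \<psi>'$i)\<bar> \<le> \<bar>\<psi>$i - \<psi>'$i\<bar>"
      by (simp add: abs_mult mult_left_le_one_le)
  qed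
  finally have inner: "\<bar>inner q \<psi> - inner q \<psi>'\<bar> \<le> (\<Sum>i\<in>UNIV. \<bar>\<psi>$i - \<psi>'$i\<bar>)" .
  have "\<bar>(\<integral>x. max_excess \<psi> (s x) \<partial>P) - (\<integral>x. max_excess \<psi>' (s x) \<partial>P)\<bar> =
      \<bar>\<integral>x. max_excess \<psi> (s x) - max_excess \<psi>' (s x) \<partial>P\<bar>"
    using integrable_max_excess by simp
  also have "\<dots> \<le> (\<integral>x. \<bar>max_excess \<psi> (s x) - max_excess \<psi>' (s x)\<bar> \<partial>P)"
    by (rule integral_abs_bound)
  also have "\<dots> \<le> (\<integral>x. (\<Sum>i\<in>UNIV. \<bar>\<psi>$i - \<psi>'$i\<bar>) \<partial>P)"
    by (intro integral_mono) (use integrable_max_excess max_excess_lipschitz in auto)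
  finally show ?thesis using inner by (simp add: dual_objective_def prob_space)
qed

lemma dual_objective_normalize:
  assumes q: "q \<in> prob_simplex"
  obtains \<psi>' where "\<psi>' \<in> cbox 0 1" "dual_objective P s q \<psi>' \<le> dual_objective P s q \<psi>"
proof -
  define c where "c = Min (range (\<lambda>i. \<psi>$i))"
  define \<psi>' :: "real^'k" where "\<psi>' = (\<chi> i. min 1 (\<psi>$i - c))"
  have "c \<le> \<psi>$i" for i by (auto simp: c_def)
  then have "\<psi>' \<in> cbox 0 1" by (simp add: \<psi>'_def mem_box_cart)
  have "AE x in P. max_excess \<psi>' (s x) = max_excess \<psi> (s x) + c"
    using AE_in_prob_simplex
  proof eventually_elim
    case (elim x)
    show ?case unfolding \<psi>'_def c_def using elim by (rule max_excess_normalize)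
  qed
  then have "(\<integral>x. max_excess \<psi>' (s x) \<partial>P) = (\<integral>x. max_excess \<psi> (s x) + c \<partial>P)"
    by (intro integral_cong_AE) auto
  also have "\<dots> = (\<integral>x. max_excess \<psi> (s x) \<partial>P) + c"
    using integrable_max_excess by (simp add: prob_space)
  finally have integral: "(\<integral>x. max_excess \<psi>' (s x) \<partial>P) = (\<integral>x. max_excess \<psi> (s x) \<partial>P) + c" .
  have "inner q \<psi>' = (\<Sum>i\<in>UNIV. q$i * min 1 (\<psi>$i - c))" by (simp add: inner_vec_def \<psi>'_def)
  also have "\<dots> \<le> (\<Sum>i\<in>UNIV. q$i * (\<psi>$i - c))"
    using q by (intro sum_mono mult_left_mono) (auto simp: prob_simplex_def)
  also have "\<dots> = inner q \<psi> - c"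
    using q by (simp add: inner_vec_def right_diff_distrib sum_subtractf sum_distrib_right[symmetric] prob_simplex_def)
  finally show ?thesis
    using that[OF \<open>\<psi>' \<in> cbox 0 1\<close>] integral by (simp add: dual_objective_def)
qed

lemma dual_objective_attains_min:
  assumes q: "q \<in> prob_simplex"
  shows "\<exists>\<psi>\<in>cbox 0 1. \<forall>\<psi>'. dual_objective P s q \<psi> \<le> dual_objective P s q \<psi>'"
proof -
  have cont: "continuous_on (cbox 0 1) (dual_objective P s q)"
    by (rule l1_lipschitz_imp_continuous_on[OF dual_objective_lipschitz[OF q]]) auto
  have "(0::real^'k) \<in> cbox 0 1" by (simp add: mem_box_cart)
  then have "cbox (0::real^'k) 1 \<noteq> {}" by blast
  from continuous_attains_inf[OF compact_cbox this cont] obtain \<psi>0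
    where \<psi>0: "\<psi>0 \<in> cbox 0 1" "\<forall>\<psi>\<in>cbox 0 1. dual_objective P s q \<psi>0 \<le> dual_objective P s q \<psi>" ..
  have "dual_objective P s q \<psi>0 \<le> dual_objective P s q \<psi>" for \<psi>
  proof -
    obtain \<psi>' where "\<psi>' \<in> cbox 0 1" "dual_objective P s q \<psi>' \<le> dual_objective P s q \<psi>"
      using dual_objective_normalize[OF q] .
    with \<psi>0(2) show ?thesis by (meson order_trans)
  qed
  then show ?thesis using \<psi>0(1) by blast
qed

lemma dual_value_eq_min:
  assumes "\<And>\<psi>'. dual_objective P s q \<psi> \<le> dual_objective P s q \<psi>'"
  shows "dual_value P s q = dual_objective P s q \<psi>"
  unfolding dual_value_def by (rule cInf_eq_minimum) (use assms in auto)

lemma dual_value_le: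
  assumes "q \<in> prob_simplex"
  shows "dual_value P s q \<le> dual_objective P s q \<psi>"
  using dual_objective_attains_min[OF assms] dual_value_eq_min by fastforce

text \<open>First-order optimality of a minimising price \<open>\<psi>\<close> in the direction \<open>d\<close>; the one-sided
  derivative of the integral is obtained by dominated convergence, the difference quotients
  being bounded by the Lipschitz constant of \<open>max_excess\<close>.\<close>
lemma dual_first_order_condition:
  assumes opt: "\<And>\<psi>'. dual_objective P s q \<psi> \<le> dual_objective P s q \<psi>'"
  shows "(\<integral>x. Min ((\<lambda>i. d$i) ` argmax_excess \<psi> (s x)) \<partial>P) \<le> inner q d"
proof -
  define \<tau> :: "nat \<Rightarrow> real" where "\<tau> n = 1 / Suc n" for n
  have \<tau>: "\<tau> n > 0" for n by (simp add: \<tau>_def)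
  define quotient where
    "quotient n x = (max_excess (\<psi> + \<tau> n *\<^sub>R d) (s x) - max_excess \<psi> (s x)) / \<tau> n" for n x
  define B where "B = (\<Sum>i\<in>UNIV. \<bar>d$i\<bar>)"
  have [measurable]: "quotient n \<in> borel_measurable P" for n
    unfolding quotient_def by measurable
  have bound: "\<bar>quotient n x\<bar> \<le> B" for n x
  proof -
    have "\<bar>max_excess (\<psi> + \<tau> n *\<^sub>R d) (s x) - max_excess \<psi> (s x)\<bar> \<le> \<tau> n * B"
      using max_excess_lipschitz[of "\<psi> + \<tau> n *\<^sub>R d" "s x" \<psi>] \<tau>[of n]
      by (simp add: B_def abs_mult sum_distrib_left)
    then show ?thesis using \<tau>[of n] by (simp add: quotient_def divide_le_eq mult.commute)
  qed
  have nonneg: "0 \<le> inner q d + integral\<^sup>L P (quotient n)" for n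
  proof -
    have "\<tau> n * integral\<^sup>L P (quotient n) =
        (\<integral>x. max_excess (\<psi> + \<tau> n *\<^sub>R d) (s x) \<partial>P) - (\<integral>x. max_excess \<psi> (s x) \<partial>P)"
      unfolding quotient_def using integrable_max_excess \<tau>[of n] by simp
    moreover have "dual_objective P s q \<psi> \<le> dual_objective P s q (\<psi> + \<tau> n *\<^sub>R d)" by (rule opt)
    ultimately have "0 \<le> \<tau> n * (inner q d + integral\<^sup>L P (quotient n))"
      by (simp add: dual_objective_def inner_add_right distrib_left)
    then show ?thesis using \<tau>[of n] by (simp add: zero_le_mult_iff)
  qed
  have "(\<lambda>n. integral\<^sup>L P (quotient n)) \<longlonglongrightarrow> (\<integral>x. - Min ((\<lambda>i. d$i) ` argmax_excess \<psi> (s x)) \<partial>P)"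
  proof (rule integral_dominated_convergence[where w="\<lambda>_. B"])
    show "AE x in P. (\<lambda>n. quotient n x) \<longlonglongrightarrow> - Min ((\<lambda>i. d$i) ` argmax_excess \<psi> (s x))"
      unfolding quotient_def \<tau>_def by (intro AE_I2 max_excess_difference_quotient)
  qed (use bound in auto)
  then have "0 \<le> inner q d + (\<integral>x. - Min ((\<lambda>i. d$i) ` argmax_excess \<psi> (s x)) \<partial>P)"
    by (intro LIMSEQ_le_const[OF tendsto_add[OF tendsto_const]]) (use nonneg in auto)
  then show ?thesis by simp
qed

lemma selector_marginal_inner:
  assumes "\<sigma> \<in> selectors"
  shows "inner a (selector_marginal P s \<psi> \<sigma>) = (\<integral>x. a $ \<sigma> (argmax_excess \<psi> (s x)) \<partial>P)"
proof -
  have "(\<lambda>x. \<sigma> (argmax_excess \<psi> (s x))) \<in> measurable P (count_space UNIV)"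
    using measurable_compose[OF measurable_argmax_excess, of \<sigma>] by simp
  from integral_finite_valued[OF this, of "\<lambda>i. a$i"] show ?thesis
    by (simp add: selector_marginal_def inner_vec_def)
qed

text \<open>If \<open>q\<close> could be separated from the laws of all selections \<open>\<sigma>(argmax)\<close> by a direction \<open>a\<close>,
  then the selection of the \<open>a\<close>-cheapest maximiser would violate the first-order condition.\<close>
lemma in_convex_hull_selector_marginals:
  assumes opt: "\<And>\<psi>'. dual_objective P s q \<psi> \<le> dual_objective P s q \<psi>'"
  shows "q \<in> convex hull (selector_marginal P s \<psi> ` selectors)"
proof (rule ccontr)
  assume q: "q \<notin> convex hull (selector_marginal P s \<psi> ` selectors)"
  have "closed (convex hull (selector_marginal P s \<psi> ` selectors))"
    by (intro compact_imp_closed compact_convex_hull finite_imp_compact finite_imageI finite)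
  then obtain a b where ab: "inner a q < b"
      "\<And>y. y \<in> convex hull (selector_marginal P s \<psi> ` selectors) \<Longrightarrow> inner a y > b"
    using separating_hyperplane_closed_point[OF convex_convex_hull _ q] by blast
  define \<sigma> where "\<sigma> S = (SOME i. i \<in> S \<and> a$i = Min ((\<lambda>j. a$j) ` S))" for S :: "'k set"
  have \<sigma>: "\<sigma> S \<in> S \<and> a$(\<sigma> S) = Min ((\<lambda>j. a$j) ` S)" if "S \<noteq> {}" for S
  proof -
    have "Min ((\<lambda>j. a$j) ` S) \<in> (\<lambda>j. a$j) ` S" using that by (intro Min_in) auto
    then have "\<exists>i. i \<in> S \<and> a$i = Min ((\<lambda>j. a$j) ` S)" by auto
    then show ?thesis unfolding \<sigma>_def by (rule someI_ex)
  qed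
  then have "\<sigma> \<in> selectors" by (auto simp: selectors_def)
  then have "b < inner a (selector_marginal P s \<psi> \<sigma>)" by (intro ab(2) hull_inc imageI)
  also have "\<dots> = (\<integral>x. Min ((\<lambda>j. a$j) ` argmax_excess \<psi> (s x)) \<partial>P)"
    using selector_marginal_inner[OF \<open>\<sigma> \<in> selectors\<close>] \<sigma>[OF argmax_excess_nonempty] by simp
  also have "\<dots> \<le> inner q a" by (rule dual_first_order_condition[OF opt])
  finally show False using ab(1) by (simp add: inner_commute)
qed

lemma mixture_kernel:
  fixes choice :: "'c \<Rightarrow> 'x \<Rightarrow> 'k"
  assumes V: "finite V" and u: "\<And>y. y \<in> V \<Longrightarrow> 0 \<le> u y" "sum u V = 1"
    and [measurable]: "\<And>y. choice y \<in> measurable P (count_space UNIV)"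
  defines "H \<equiv> \<lambda>x i. \<Sum>y\<in>V. u y * of_bool (choice y x = i)"
  shows "stochastic_kernel P H"
    and "kernel_marginal P H = (\<Sum>y\<in>V. u y *\<^sub>R (\<chi> i. measure P {x\<in>space P. choice y x = i}))"
    and "H x i \<noteq> 0 \<Longrightarrow> \<exists>y\<in>V. choice y x = i"
proof -
  show "stochastic_kernel P H"
    unfolding stochastic_kernel_def
  proof (intro conjI allI)
    show "(\<lambda>x. H x i) \<in> borel_measurable P" for i
      unfolding H_def by measurable
    show "0 \<le> H x i" for x i
      unfolding H_def using u(1) by (intro sum_nonneg) auto
    show "(\<Sum>i\<in>UNIV. H x i) = 1" for x
      unfolding H_def using u(2) by (simp add: sum.swap[of _ V] sum_distrib_left[symmetric] sum.If_cases)
  qed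
  have "(\<integral>x. H x i \<partial>P) = (\<Sum>y\<in>V. u y * measure P {x\<in>space P. choice y x = i})" for i
  proof -
    have "integrable P (\<lambda>x. of_bool (choice y x = i) :: real)" for y
      by (rule integrable_const_bound[where B=1]) auto
    then show ?thesis
      unfolding H_def using integral_finite_valued[of "choice _" "\<lambda>j. of_bool (j = i)"]
      by (subst Bochner_Integration.integral_sum) (auto simp: of_bool_def sum_indicator_eq)
  qed
  then show "kernel_marginal P H = (\<Sum>y\<in>V. u y *\<^sub>R (\<chi> i. measure P {x\<in>space P. choice y x = i}))"
    by (simp add: kernel_marginal_def vec_eq_iff)
  show "\<exists>y\<in>V. choice y x = i" if "H x i \<noteq> 0"
  proof (rule ccontr)
    assume "\<not> (\<exists>y\<in>V. choice y x = i)"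
    then have "H x i = 0" unfolding H_def by (intro sum.neutral) auto
    with that show False by simp
  qed
qed

lemma kernel_from_selector_mixture:
  assumes "q \<in> convex hull (selector_marginal P s \<psi> ` selectors)"
  obtains H :: "'x \<Rightarrow> 'k \<Rightarrow> real"
  where "stochastic_kernel P H" "kernel_marginal P H = q"
    "\<And>x i. H x i \<noteq> 0 \<Longrightarrow> i \<in> argmax_excess \<psi> (s x)"
proof -
  define V where "V = selector_marginal P s \<psi> ` selectors"
  have "finite V" unfolding V_def by simp
  then obtain u where u: "\<And>y. y \<in> V \<Longrightarrow> 0 \<le> u y" "sum u V = 1" "(\<Sum>y\<in>V. u y *\<^sub>R y) = q"
    using assms unfolding V_def convex_hull_finite[OF finite_imageI[OF finite]] by blast
  define \<sigma> where "\<sigma> y = inv_into selectors (selector_marginal P s \<psi>) y" for y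
  have \<sigma>: "\<sigma> y \<in> selectors" "selector_marginal P s \<psi> (\<sigma> y) = y" if "y \<in> V" for y
    using that unfolding V_def \<sigma>_def by (auto intro: inv_into_into simp: f_inv_into_f[OF imageI])
  define choice where "choice y x = \<sigma> y (argmax_excess \<psi> (s x))" for y x
  have "choice y \<in> measurable P (count_space UNIV)" for y
    using measurable_compose[OF measurable_argmax_excess, of "\<sigma> y"] by (simp add: choice_def[abs_def])
  note mixture = mixture_kernel[of V u choice, OF \<open>finite V\<close> u(1,2) this]
  have "(\<Sum>y\<in>V. u y *\<^sub>R (\<chi> i. measure P {x\<in>space P. choice y x = i})) = q"
    using \<sigma>(2) u(3) by (simp add: selector_marginal_def choice_def cong: sum.cong)
  moreover have "i \<in> argmax_excess \<psi> (s x)" if "y \<in> V" "choice y x = i" for x i y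
    using \<sigma>(1)[OF that(1)] argmax_excess_nonempty[of \<psi> "s x"] that(2)
    unfolding choice_def selectors_def by blast
  ultimately show ?thesis
    using that[OF mixture(1)] mixture(2,3) by metis
qed

theorem strong_duality:
  assumes "q \<in> prob_simplex"
  obtains \<psi> H where "\<psi> \<in> cbox 0 1" "\<And>\<psi>'. dual_objective P s q \<psi> \<le> dual_objective P s q \<psi>'"
    "stochastic_kernel P H" "kernel_marginal P H = q" "kernel_gain P s H = dual_objective P s q \<psi>"
proof -
  obtain \<psi> where \<psi>: "\<psi> \<in> cbox 0 1" "\<And>\<psi>'. dual_objective P s q \<psi> \<le> dual_objective P s q \<psi>'"
    using dual_objective_attains_min[OF assms] by blast
  obtain H where H: "stochastic_kernel P H" "kernel_marginal P H = q"
      "\<And>x i. H x i \<noteq> 0 \<Longrightarrow> i \<in> argmax_excess \<psi> (s x)"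
    using kernel_from_selector_mixture[OF in_convex_hull_selector_marginals[OF \<psi>(2)]] by blast
  show ?thesis
    using that[OF \<psi> H(1,2)] kernel_gain_le_dual_objective(2)[OF H(1) H(3)] H(2) by blast
qed

corollary dual_value_attained:
  assumes "q \<in> prob_simplex"
  obtains \<psi> H where "\<psi> \<in> cbox 0 1" "dual_value P s q = dual_objective P s q \<psi>"
    "stochastic_kernel P H" "kernel_marginal P H = q" "kernel_gain P s H = dual_value P s q"
  using strong_duality[OF assms] dual_value_eq_min by metis

lemma kernel_gain_le_dual_value:
  fixes H :: "'x \<Rightarrow> 'k \<Rightarrow> real"
  assumes "stochastic_kernel P H"
  shows "kernel_gain P s H \<le> dual_value P s (kernel_marginal P H)"
  using dual_value_attained[OF kernel_marginal_in_prob_simplex[OF assms]]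
    kernel_gain_le_dual_objective(1)[OF assms] by metis

lemma dual_value_lipschitz:
  assumes q: "q \<in> prob_simplex" and q': "q' \<in> prob_simplex"
  shows "dual_value P s q \<le> dual_value P s q' + (\<Sum>i\<in>UNIV. \<bar>q$i - q'$i\<bar>)"
proof -
  obtain \<psi> where \<psi>: "\<psi> \<in> cbox 0 1" "dual_value P s q' = dual_objective P s q' \<psi>"
    using dual_value_attained[OF q'] by metis
  have "inner q \<psi> - inner q' \<psi> = (\<Sum>i\<in>UNIV. (q$i - q'$i) * \<psi>$i)"
    by (simp add: inner_vec_def sum_subtractf left_diff_distrib)
  also have "\<dots> \<le> (\<Sum>i\<in>UNIV. \<bar>q$i - q'$i\<bar>)"
  proof (intro sum_mono)
    fix i
    have "0 \<le> \<psi>$i" "\<psi>$i \<le> 1" using \<psi>(1) by (auto simp: mem_box_cart)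
    then have "(q$i - q'$i) * \<psi>$i \<le> \<bar>q$i - q'$i\<bar> * \<psi>$i" by (intro mult_right_mono) auto
    also have "\<dots> \<le> \<bar>q$i - q'$i\<bar>" using \<open>\<psi>$i \<le> 1\<close> by (simp add: mult_left_le)
    finally show "(q$i - q'$i) * \<psi>$i \<le> \<bar>q$i - q'$i\<bar>" .
  qed
  finally show ?thesis
    using dual_value_le[OF q, of \<psi>] \<psi>(2) by (simp add: dual_objective_def)
qed

end

section \<open>Label distributions and couplings\<close>

lemma finite_labels: "finite (labels :: (real^'k) set)"
  by (simp add: labels_def)

lemma axis_in_labels: "axis i 1 \<in> labels"
  by (simp add: labels_def)

lemma labels_iff: "y \<in> labels \<longleftrightarrow> (\<exists>j. y = axis j 1)"
  by (auto simp: labels_def)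

lemma labels_borel: "labels \<in> sets (borel :: (real^'k) measure)"
  by (simp add: finite_labels finite_imp_closed borel_closed)

lemma sum_labels: "(\<Sum>y\<in>labels. g y) = (\<Sum>i\<in>UNIV. g (axis i (1::real)) :: real)"
  unfolding labels_def by (subst sum.reindex) (auto intro: injI simp: axis_eq_axis)

lemma inner_axis_1: "inner \<psi> (axis j (1::real)) = \<psi> $ j"
  by (simp add: inner_axis)

definition label_weights :: "(real^'k) measure \<Rightarrow> real^'k" where
  "label_weights q = (\<chi> i. measure q {axis i 1})"

definition label_measure :: "real^'k \<Rightarrow> (real^'k) measure" where
  "label_measure v = distr (density (count_space UNIV) (\<lambda>i. ennreal (v$i))) borel (\<lambda>i. axis i 1)"

lemma emeasure_label_measure:
  assumes v: "v \<in> prob_simplex" and B: "B \<in> sets borel"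
  shows "emeasure (label_measure v) B = ennreal (\<Sum>i\<in>UNIV. indicator B (axis i 1) * v$i)"
proof -
  have "emeasure (label_measure v) B =
      emeasure (density (count_space UNIV) (\<lambda>i. ennreal (v$i))) ((\<lambda>i. axis i 1) -` B)"
    unfolding label_measure_def using B by (subst emeasure_distr) auto
  also have "\<dots> = (\<Sum>i\<in>UNIV. ennreal (v$i) * indicator ((\<lambda>i. axis i 1) -` B) i)"
    by (simp add: emeasure_density nn_integral_count_space_finite)
  also have "\<dots> = (\<Sum>i\<in>UNIV. ennreal (indicator B (axis i 1) * v$i))"
    by (intro sum.cong refl) (auto simp: indicator_def)
  also have "\<dots> = ennreal (\<Sum>i\<in>UNIV. indicator B (axis i 1) * v$i)"
    using v by (intro sum_ennreal) (auto simp: prob_simplex_def)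
  finally show ?thesis .
qed

lemma label_measure_in_Qk:
  assumes v: "v \<in> prob_simplex"
  shows "label_measure v \<in> Qk"
proof -
  have "emeasure (label_measure v) (space (label_measure v)) = 1"
    using emeasure_label_measure[OF v, of UNIV] v by (simp add: label_measure_def prob_simplex_def)
  moreover have "emeasure (label_measure v) labels = 1"
    using emeasure_label_measure[OF v labels_borel] v by (simp add: prob_simplex_def axis_in_labels)
  ultimately show ?thesis
    by (auto simp: Qk_def label_measure_def measure_def intro: prob_spaceI)
qed

lemma label_weights_label_measure:
  assumes v: "v \<in> prob_simplex"
  shows "label_weights (label_measure v) = v"
proof -
  have "(\<Sum>j\<in>UNIV. indicator {axis i 1} (axis j (1::real)) * v$j) = v$i" for i
  proof -
    have "(\<Sum>j\<in>UNIV. indicator {axis i 1} (axis j (1::real)) * v$j) = (\<Sum>j\<in>UNIV. if j = i then v$j else 0)"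
      by (intro sum.cong refl) (auto simp: indicator_def axis_eq_axis)
    then show ?thesis by simp
  qed
  then have "measure (label_measure v) {axis i 1} = v$i" for i
    using emeasure_label_measure[OF v, of "{axis i 1}"] v by (simp add: measure_def prob_simplex_def)
  then show ?thesis by (simp add: label_weights_def vec_eq_iff)
qed

lemma measure_Qk_eq_label_sum:
  assumes q: "q \<in> Qk" and B: "B \<in> sets borel"
  shows "measure q B = (\<Sum>i\<in>UNIV. indicator B (axis i 1) * measure q {axis i 1})"
proof -
  have sets: "sets q = sets borel" and "prob_space q" and L: "measure q labels = 1"
    using q by (auto simp: Qk_def)
  interpret q: prob_space q by fact
  have "measure q (B - labels) \<le> measure q (space q - labels)"
    using B labels_borel sets_eq_imp_space_eq[OF sets] by (intro q.finite_measure_mono) (auto simp: sets)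
  also have "\<dots> = 0" using q.prob_compl[of labels] labels_borel L by (simp add: sets)
  finally have "measure q (B - labels) = 0" by (simp add: measure_le_0_iff)
  moreover have "measure q (B - (B \<inter> labels)) = measure q B - measure q (B \<inter> labels)"
    using B labels_borel by (intro q.finite_measure_Diff) (auto simp: sets)
  moreover have "B - (B \<inter> labels) = B - labels" by blast
  moreover have "measure q (B \<inter> labels) = (\<Sum>y\<in>B \<inter> labels. measure q {y})"
    by (rule q.finite_measure_eq_sum_singleton) (auto simp: finite_labels sets)
  moreover have "(\<Sum>y\<in>B \<inter> labels. measure q {y}) = (\<Sum>y\<in>labels. indicator B y * measure q {y})"
  proof -
    have "B \<inter> labels = {y\<in>labels. y \<in> B}" by blast
    then have "(\<Sum>y\<in>B \<inter> labels. measure q {y}) = (\<Sum>y\<in>labels. if y \<in> B then measure q {y} else 0)"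
      by (simp add: sum.inter_filter[OF finite_labels])
    also have "\<dots> = (\<Sum>y\<in>labels. indicator B y * measure q {y})"
      by (intro sum.cong) (auto simp: indicator_def)
    finally show ?thesis .
  qed
  ultimately show ?thesis by (simp add: sum_labels)
qed

lemma Qk_eq_label_measure:
  assumes q: "q \<in> Qk"
  shows "label_weights q \<in> prob_simplex" "q = label_measure (label_weights q)"
proof -
  have sets: "sets q = sets borel" and "prob_space q" and "measure q labels = 1"
    using q by (auto simp: Qk_def)
  then show v: "label_weights q \<in> prob_simplex"
    using measure_Qk_eq_label_sum[OF q labels_borel]
    by (simp add: prob_simplex_def label_weights_def axis_in_labels)
  show "q = label_measure (label_weights q)"
  proof (rule measure_eqI)
    show "sets q = sets (label_measure (label_weights q))" by (simp add: sets label_measure_def)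
    interpret q: prob_space q by fact
    fix B assume "B \<in> sets q"
    then have B: "B \<in> sets borel" by (simp add: sets)
    show "emeasure q B = emeasure (label_measure (label_weights q)) B"
      using measure_Qk_eq_label_sum[OF q B] emeasure_label_measure[OF v B]
      by (simp add: label_weights_def q.emeasure_eq_measure)
  qed
qed

lemma measurable_fst_borel[measurable]:
  "fst \<in> borel_measurable (borel :: ('a::second_countable_topology \<times> 'b::second_countable_topology) measure)"
  by (rule borel_measurable_continuous_onI) (intro continuous_intros)

lemma measurable_snd_borel[measurable]:
  "snd \<in> borel_measurable (borel :: ('a::second_countable_topology \<times> 'b::second_countable_topology) measure)"
  by (rule borel_measurable_continuous_onI) (intro continuous_intros)

lemma borel_measurable_l1dist[measurable]:
  "(\<lambda>z. l1dist (fst z) (snd z)) \<in> borel_measurable (borel :: ((real^'k) \<times> (real^'k)) measure)"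
  unfolding l1dist_def by measurable

text \<open>The law of \<open>(s X, e\<^sub>I)\<close> for \<open>X \<sim> P\<close> and a label \<open>I\<close> drawn from \<open>H X\<close>.\<close>
definition kernel_coupling ::
  "'x measure \<Rightarrow> ('x \<Rightarrow> real^'k) \<Rightarrow> ('x \<Rightarrow> 'k \<Rightarrow> real) \<Rightarrow> ((real^'k) \<times> (real^'k)) measure" where
  "kernel_coupling P s H =
     distr (density (count_space UNIV \<Otimes>\<^sub>M P) (\<lambda>z. ennreal (H (snd z) (fst z)))) borel
       (\<lambda>z. (s (snd z), axis (fst z) 1))"

context simplex_rv
begin

lemma AE_coupling_label_measure:
  assumes \<gamma>: "\<gamma> \<in> couplings (distr P borel s) (label_measure v)"
  shows "AE z in \<gamma>. fst z \<in> prob_simplex \<and> snd z \<in> labels"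
proof -
  have sets: "sets \<gamma> = sets borel"
    and fst: "distr \<gamma> borel fst = distr P borel s" and snd: "distr \<gamma> borel snd = label_measure v"
    using \<gamma> by (auto simp: couplings_def)
  have "AE x in distr \<gamma> borel fst. x \<in> prob_simplex"
    unfolding fst using AE_in_prob_simplex prob_simplex_borel by (subst AE_distr_iff) auto
  moreover have "AE x in distr \<gamma> borel snd. x \<in> labels"
    unfolding snd label_measure_def by (subst AE_distr_iff) (auto simp: axis_in_labels labels_borel)
  ultimately show ?thesis
    using prob_simplex_borel labels_borel
    by (subst (asm) (1 2) AE_distr_iff) (auto simp: measurable_cong_sets[OF sets refl])
qed

lemma integral_dual_coupling:
  assumes v: "v \<in> prob_simplex" and \<gamma>: "\<gamma> \<in> couplings (distr P borel s) (label_measure v)"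
  shows "integrable \<gamma> (\<lambda>z. max_excess \<psi> (fst z) + inner \<psi> (snd z))"
    and "(\<integral>z. max_excess \<psi> (fst z) + inner \<psi> (snd z) \<partial>\<gamma>) = dual_objective P s v \<psi>"
proof -
  have sets: "sets \<gamma> = sets borel" and "prob_space \<gamma>"
    and fst: "distr \<gamma> borel fst = distr P borel s" and snd: "distr \<gamma> borel snd = label_measure v"
    using \<gamma> by (auto simp: couplings_def)
  interpret \<gamma>: prob_space \<gamma> by fact
  have [measurable]: "fst \<in> borel_measurable \<gamma>" "snd \<in> borel_measurable \<gamma>"
    by (simp_all add: measurable_cong_sets[OF sets refl])
  have AE: "AE z in \<gamma>. fst z \<in> prob_simplex \<and> snd z \<in> labels"
    by (rule AE_coupling_label_measure[OF \<gamma>])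
  define B where "B = (\<Sum>i\<in>UNIV. \<bar>\<psi>$i\<bar>)"
  have int_excess: "integrable \<gamma> (\<lambda>z. max_excess \<psi> (fst z))"
    by (rule \<gamma>.integrable_const_bound[where B="1 + B"]) (use AE abs_max_excess_le in \<open>auto simp: B_def\<close>)
  have int_price: "integrable \<gamma> (\<lambda>z. inner \<psi> (snd z))"
    by (rule \<gamma>.integrable_const_bound[where B=B])
       (use AE member_le_sum[of _ UNIV "\<lambda>i. \<bar>\<psi>$i\<bar>"] in \<open>auto simp: labels_iff inner_axis_1 B_def\<close>)
  then show "integrable \<gamma> (\<lambda>z. max_excess \<psi> (fst z) + inner \<psi> (snd z))"
    using int_excess by simp
  have "(\<integral>z. max_excess \<psi> (fst z) \<partial>\<gamma>) = integral\<^sup>L (distr P borel s) (max_excess \<psi>)"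
    by (subst fst[symmetric], subst integral_distr) (auto simp: measurable_cong_sets[OF sets refl])
  also have "\<dots> = (\<integral>x. max_excess \<psi> (s x) \<partial>P)" by (rule integral_distr) measurable
  finally have excess: "(\<integral>z. max_excess \<psi> (fst z) \<partial>\<gamma>) = (\<integral>x. max_excess \<psi> (s x) \<partial>P)" .
  have "(\<integral>z. inner \<psi> (snd z) \<partial>\<gamma>) = integral\<^sup>L (label_measure v) (inner \<psi>)"
    by (subst snd[symmetric], subst integral_distr) (auto simp: measurable_cong_sets[OF sets refl])
  also have "\<dots> = (\<integral>i. v$i * inner \<psi> (axis i 1) \<partial>count_space UNIV)"
    unfolding label_measure_def using v
    by (subst integral_distr) (auto simp: integral_density prob_simplex_def)
  also have "\<dots> = inner v \<psi>"
    by (simp only: lebesgue_integral_count_space_finite[OF finite] inner_axis_1)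
       (simp add: inner_vec_def mult.commute)
  finally show "(\<integral>z. max_excess \<psi> (fst z) + inner \<psi> (snd z) \<partial>\<gamma>) = dual_objective P s v \<psi>"
    using excess int_excess int_price by (simp add: dual_objective_def)
qed

text \<open>Pointwise, \<open>\<parallel>t - e\<^sub>j\<parallel>\<^sub>1 = 2 - 2 t$j \<ge> 2 - 2 (max_excess \<psi> t + \<psi>$j)\<close>.\<close>
lemma transport_cost_ge_dual:
  assumes v: "v \<in> prob_simplex" and \<gamma>: "\<gamma> \<in> couplings (distr P borel s) (label_measure v)"
  shows "2 - 2 * dual_objective P s v \<psi> \<le> transport_cost \<gamma>"
proof -
  have sets: "sets \<gamma> = sets borel" and "prob_space \<gamma>" using \<gamma> by (auto simp: couplings_def)
  interpret \<gamma>: prob_space \<gamma> by fact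
  have AE: "AE z in \<gamma>. fst z \<in> prob_simplex \<and> snd z \<in> labels"
    by (rule AE_coupling_label_measure[OF \<gamma>])
  have pointwise: "2 - 2 * (max_excess \<psi> t + inner \<psi> y) \<le> l1dist t y"
    if "t \<in> prob_simplex" "y \<in> labels" for t y
  proof -
    obtain j where "y = axis j 1" using \<open>y \<in> labels\<close> by (auto simp: labels_iff)
    then show ?thesis using l1dist_axis[OF that(1), of j] max_excess_ge[of t j \<psi>] by (simp add: inner_axis_1)
  qed
  have int_l1: "integrable \<gamma> (\<lambda>z. l1dist (fst z) (snd z))"
  proof (rule \<gamma>.integrable_const_bound[where B=2])
    show "AE z in \<gamma>. norm (l1dist (fst z) (snd z)) \<le> 2"
      using AE
    proof eventually_elim
      case (elim z)
      then obtain j where "snd z = axis j 1" by (auto simp: labels_iff)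
      then show ?case using l1dist_axis[of "fst z" j] elim prob_simplex_nth_le_1[of "fst z" j]
        by (auto simp: prob_simplex_def)
    qed
  qed (simp add: measurable_cong_sets[OF sets refl])
  define F where "F z = max_excess \<psi> (fst z) + inner \<psi> (snd z)" for z
  have F: "integrable \<gamma> F" "integral\<^sup>L \<gamma> F = dual_objective P s v \<psi>"
    using integral_dual_coupling[OF v \<gamma>] by (simp_all add: F_def[abs_def])
  have "2 - 2 * integral\<^sup>L \<gamma> F = (\<integral>z. 2 - 2 * F z \<partial>\<gamma>)"
    using F(1) by (simp add: \<gamma>.prob_space)
  also have "\<dots> \<le> (\<integral>z. l1dist (fst z) (snd z) \<partial>\<gamma>)"
  proof (rule integral_mono_AE[OF _ int_l1])
    show "integrable \<gamma> (\<lambda>z. 2 - 2 * F z)" using F(1) by simp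
    show "AE z in \<gamma>. 2 - 2 * F z \<le> l1dist (fst z) (snd z)"
      using AE by eventually_elim (unfold F_def, rule pointwise, auto)
  qed
  finally show ?thesis
    using F(2) by (simp add: transport_cost_def case_prod_unfold)
qed

lemma nn_integral_kernel_coupling:
  fixes H :: "'x \<Rightarrow> 'k \<Rightarrow> real"
  assumes H: "stochastic_kernel P H" and [measurable]: "g \<in> borel_measurable borel"
  shows "(\<integral>\<^sup>+z. g z \<partial>kernel_coupling P s H) = (\<integral>\<^sup>+x. (\<Sum>i\<in>UNIV. ennreal (H x i) * g (s x, axis i 1)) \<partial>P)"
proof -
  have [measurable]: "(\<lambda>x. H x i) \<in> borel_measurable P" for i
    using H by (simp add: stochastic_kernel_def)
  have [measurable]: "(\<lambda>z. H (snd z) (fst z)) \<in> borel_measurable (count_space UNIV \<Otimes>\<^sub>M P)"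
    by (rule measurable_pair_measure_countable1) auto
  have [measurable]: "(\<lambda>z. axis (fst z) (1::real)) \<in> borel_measurable (count_space UNIV \<Otimes>\<^sub>M P)"
    by (rule measurable_compose[OF measurable_fst]) simp
  have "(\<integral>\<^sup>+z. g z \<partial>kernel_coupling P s H) =
      (\<integral>\<^sup>+z. ennreal (H (snd z) (fst z)) * g (s (snd z), axis (fst z) 1) \<partial>(count_space UNIV \<Otimes>\<^sub>M P))"
    unfolding kernel_coupling_def by (simp add: nn_integral_distr nn_integral_density)
  also have "\<dots> = (\<integral>\<^sup>+i. \<integral>\<^sup>+x. ennreal (H x i) * g (s x, axis i 1) \<partial>P \<partial>count_space UNIV)"
    by (subst nn_integral_fst[symmetric]) simp_all
  also have "\<dots> = (\<integral>\<^sup>+x. (\<Sum>i\<in>UNIV. ennreal (H x i) * g (s x, axis i 1)) \<partial>P)"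
    by (simp add: nn_integral_count_space_finite nn_integral_sum)
  finally show ?thesis .
qed

lemma emeasure_kernel_coupling:
  fixes H :: "'x \<Rightarrow> 'k \<Rightarrow> real"
  assumes H: "stochastic_kernel P H" and A: "A \<in> sets borel"
  shows "emeasure (kernel_coupling P s H) A =
    (\<integral>\<^sup>+x. (\<Sum>i\<in>UNIV. ennreal (H x i) * indicator A (s x, axis i 1)) \<partial>P)"
proof -
  have "emeasure (kernel_coupling P s H) A = (\<integral>\<^sup>+z. indicator A z \<partial>kernel_coupling P s H)"
    using A by (simp add: kernel_coupling_def)
  also have "\<dots> = (\<integral>\<^sup>+x. (\<Sum>i\<in>UNIV. ennreal (H x i) * indicator A (s x, axis i 1)) \<partial>P)"
    by (rule nn_integral_kernel_coupling[OF H]) (use A in measurable)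
  finally show ?thesis .
qed

lemma distr_fst_kernel_coupling:
  fixes H :: "'x \<Rightarrow> 'k \<Rightarrow> real"
  assumes H: "stochastic_kernel P H"
  shows "distr (kernel_coupling P s H) borel fst = distr P borel s"
proof (rule measure_eqI)
  fix B assume "B \<in> sets (distr (kernel_coupling P s H) borel fst)"
  then have B[measurable]: "B \<in> sets borel" by simp
  have "emeasure (kernel_coupling P s H) (fst -` B) =
      (\<integral>\<^sup>+x. (\<Sum>i\<in>UNIV. ennreal (H x i) * indicator (fst -` B) (s x, axis i (1::real))) \<partial>P)"
    by (rule emeasure_kernel_coupling[OF H]) (use measurable_sets[OF measurable_fst_borel B] in simp)
  also have "\<dots> = (\<integral>\<^sup>+x. indicator (s -` B \<inter> space P) x \<partial>P)"
    using H by (intro nn_integral_cong) (simp add: indicator_def stochastic_kernel_def)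
  finally show "emeasure (distr (kernel_coupling P s H) borel fst) B = emeasure (distr P borel s) B"
    by (simp add: emeasure_distr kernel_coupling_def)
qed simp

lemma distr_snd_kernel_coupling:
  fixes H :: "'x \<Rightarrow> 'k \<Rightarrow> real"
  assumes H: "stochastic_kernel P H"
  shows "distr (kernel_coupling P s H) borel snd = label_measure (kernel_marginal P H)"
proof (rule measure_eqI)
  have [measurable]: "(\<lambda>x. H x i) \<in> borel_measurable P" for i
    using H by (simp add: stochastic_kernel_def)
  have v: "kernel_marginal P H \<in> prob_simplex" by (rule kernel_marginal_in_prob_simplex[OF H])
  fix B assume "B \<in> sets (distr (kernel_coupling P s H) borel snd)"
  then have B[measurable]: "B \<in> sets borel" by simp
  have marginal: "(\<integral>\<^sup>+x. ennreal (H x i) \<partial>P) = ennreal (kernel_marginal P H $ i)" for i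
    using integrable_kernel(1)[OF H, of i] H
    by (simp add: kernel_marginal_def nn_integral_eq_integral stochastic_kernel_def)
  have "emeasure (kernel_coupling P s H) (snd -` B) =
      (\<integral>\<^sup>+x. (\<Sum>i\<in>UNIV. ennreal (H x i) * indicator (snd -` B) (s x, axis i (1::real))) \<partial>P)"
    by (rule emeasure_kernel_coupling[OF H]) (use measurable_sets[OF measurable_snd_borel B] in simp)
  also have "\<dots> = (\<Sum>i\<in>UNIV. (\<integral>\<^sup>+x. ennreal (H x i) \<partial>P) * indicator B (axis i (1::real)))"
    by (subst nn_integral_sum) (simp_all add: indicator_vimage nn_integral_multc)
  also have "\<dots> = (\<Sum>i\<in>UNIV. ennreal (indicator B (axis i 1) * kernel_marginal P H $ i))"
    using v by (intro sum.cong refl) (auto simp: marginal indicator_def prob_simplex_def)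
  also have "\<dots> = emeasure (label_measure (kernel_marginal P H)) B"
    using v by (simp add: emeasure_label_measure prob_simplex_def)
  finally show "emeasure (distr (kernel_coupling P s H) borel snd) B =
      emeasure (label_measure (kernel_marginal P H)) B"
    by (simp add: emeasure_distr kernel_coupling_def)
qed (simp add: label_measure_def)

lemma kernel_coupling_in_couplings:
  fixes H :: "'x \<Rightarrow> 'k \<Rightarrow> real"
  assumes H: "stochastic_kernel P H"
  shows "kernel_coupling P s H \<in> couplings (distr P borel s) (label_measure (kernel_marginal P H))"
proof -
  have "prob_space (kernel_coupling P s H)"
    using H emeasure_kernel_coupling[OF H, of UNIV]
    by (intro prob_spaceI) (simp add: kernel_coupling_def stochastic_kernel_def emeasure_space_1)
  then show ?thesis
    by (simp add: couplings_def distr_fst_kernel_coupling[OF H] distr_snd_kernel_coupling[OF H])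
       (simp add: kernel_coupling_def)
qed

lemma transport_cost_kernel_coupling:
  fixes H :: "'x \<Rightarrow> 'k \<Rightarrow> real"
  assumes H: "stochastic_kernel P H"
  shows "transport_cost (kernel_coupling P s H) = 2 - 2 * kernel_gain P s H"
proof -
  define gain where "gain x = (\<Sum>i\<in>UNIV. H x i * s x $ i)" for x
  have [measurable]: "(\<lambda>x. H x i) \<in> borel_measurable P" for i
    using H by (simp add: stochastic_kernel_def)
  have H0: "0 \<le> H x i" for x i using H by (simp add: stochastic_kernel_def)
  have gain_int: "integrable P gain"
    unfolding gain_def by (intro Bochner_Integration.integrable_sum integrable_kernel(2)[OF H])
  have pointwise: "(\<Sum>i\<in>UNIV. ennreal (H x i) * ennreal (l1dist (s x) (axis i 1))) = ennreal (2 - 2 * gain x)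
      \<and> 0 \<le> 2 - 2 * gain x" if "s x \<in> prob_simplex" for x
  proof -
    have le1: "s x $ i \<le> 1" for i using prob_simplex_nth_le_1[OF that] .
    have "(\<Sum>i\<in>UNIV. ennreal (H x i) * ennreal (l1dist (s x) (axis i 1))) =
        ennreal (\<Sum>i\<in>UNIV. H x i * (2 - 2 * s x $ i))"
      using H0 le1 by (simp add: l1dist_axis[OF that] ennreal_mult'[symmetric])
    moreover have "(\<Sum>i\<in>UNIV. H x i * (2 - 2 * s x $ i)) = 2 * (\<Sum>i\<in>UNIV. H x i) - 2 * gain x"
      by (simp add: gain_def algebra_simps sum_subtractf sum_distrib_left)
    moreover have "(\<Sum>i\<in>UNIV. H x i) = 1" using H by (simp add: stochastic_kernel_def)
    moreover have "0 \<le> (\<Sum>i\<in>UNIV. H x i * (2 - 2 * s x $ i))"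
      using H0 le1 by (intro sum_nonneg) simp
    ultimately show ?thesis by simp
  qed
  have "transport_cost (kernel_coupling P s H) =
      enn2real (\<integral>\<^sup>+z. ennreal (l1dist (fst z) (snd z)) \<partial>kernel_coupling P s H)"
    unfolding transport_cost_def case_prod_unfold
    by (rule integral_eq_nn_integral) (auto simp: kernel_coupling_def l1dist_def)
  also have "(\<integral>\<^sup>+z. ennreal (l1dist (fst z) (snd z)) \<partial>kernel_coupling P s H) =
      (\<integral>\<^sup>+x. ennreal (2 - 2 * gain x) \<partial>P)"
    using AE_in_prob_simplex pointwise
    by (subst nn_integral_kernel_coupling[OF H]) (auto intro!: nn_integral_cong_AE)
  also have "\<dots> = ennreal (\<integral>x. 2 - 2 * gain x \<partial>P)"
    using AE_in_prob_simplex pointwise gain_int by (intro nn_integral_eq_integral) auto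
  also have "enn2real \<dots> = (\<integral>x. 2 - 2 * gain x \<partial>P)"
    using AE_in_prob_simplex pointwise by (intro enn2real_ennreal integral_nonneg_AE) auto
  also have "\<dots> = 2 - 2 * kernel_gain P s H"
    using gain_int by (simp add: kernel_gain_def gain_def[abs_def] prob_space)
  finally show ?thesis .
qed

theorem min_transport_cost:
  assumes q: "q \<in> Qk"
  shows "is_min (transport_cost ` couplings (distr P borel s) q) (2 - 2 * dual_value P s (label_weights q))"
    and "W1 (distr P borel s) q = 2 - 2 * dual_value P s (label_weights q)"
proof -
  have v: "label_weights q \<in> prob_simplex" and q_eq: "q = label_measure (label_weights q)"
    using Qk_eq_label_measure[OF q] by auto
  obtain \<psi> H where \<psi>: "dual_value P s (label_weights q) = dual_objective P s (label_weights q) \<psi>"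
    and H: "stochastic_kernel P H" "kernel_marginal P H = label_weights q"
      "kernel_gain P s H = dual_value P s (label_weights q)"
    using dual_value_attained[OF v] by metis
  have attained: "2 - 2 * dual_value P s (label_weights q) \<in> transport_cost ` couplings (distr P borel s) q"
    using kernel_coupling_in_couplings[OF H(1)] transport_cost_kernel_coupling[OF H(1)] H(2,3) q_eq
    by (metis image_eqI)
  have lower: "2 - 2 * dual_value P s (label_weights q) \<le> c"
    if "c \<in> transport_cost ` couplings (distr P borel s) q" for c
    using that transport_cost_ge_dual[OF v, of _ \<psi>] q_eq \<psi> by auto
  show "is_min (transport_cost ` couplings (distr P borel s) q) (2 - 2 * dual_value P s (label_weights q))"
    using attained lower by (simp add: is_min_def)
  show "W1 (distr P borel s) q = 2 - 2 * dual_value P s (label_weights q)"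
    unfolding W1_def by (rule cInf_eq_minimum[OF attained lower])
qed

end

section \<open>Classification problems and the Bayes regressor\<close>

lemma AE_nonneg_if_set_integrals_nonneg:
  fixes u :: "'b \<Rightarrow> real"
  assumes \<pi>[measurable]: "\<pi> \<in> measurable M N" and [measurable]: "u \<in> borel_measurable N"
    and int: "integrable M (\<lambda>\<omega>. u (\<pi> \<omega>))"
    and nonneg: "\<And>C. C \<in> sets N \<Longrightarrow> 0 \<le> (\<integral>\<omega>. indicator C (\<pi> \<omega>) * u (\<pi> \<omega>) \<partial>M)"
  shows "AE \<omega> in M. 0 \<le> u (\<pi> \<omega>)"
proof -
  define C where "C = {z \<in> space N. u z < 0}"
  have [measurable]: "C \<in> sets N" unfolding C_def by measurable
  define h where "h \<omega> = - (indicator C (\<pi> \<omega>) * u (\<pi> \<omega>))" for \<omega>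
  have h_int: "integrable M h"
    unfolding h_def
    by (intro integrable_minus Bochner_Integration.integrable_bound[OF int]) (auto simp: indicator_def)
  have h_nonneg: "0 \<le> h \<omega>" for \<omega>
    by (auto simp: h_def C_def indicator_def)
  have "integral\<^sup>L M h \<le> 0" using nonneg[of C] by (simp add: h_def[abs_def])
  moreover have "0 \<le> integral\<^sup>L M h"
    by (rule Bochner_Integration.integral_nonneg) (simp add: h_nonneg)
  ultimately have "integral\<^sup>L M h = 0" by simp
  then have "AE \<omega> in M. h \<omega> = 0"
    using integral_nonneg_eq_0_iff_AE[OF h_int] h_nonneg by simp
  then show ?thesis
    using AE_space by eventually_elim (auto simp: h_def C_def indicator_def measurable_space[OF \<pi>])
qed

abbreviation features_groups :: "nat \<Rightarrow> ('x::topological_space \<times> nat) measure" where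
  "features_groups m \<equiv> borel \<Otimes>\<^sub>M count_space {1..m}"

definition classifier_kernel :: "('x \<Rightarrow> nat \<Rightarrow> real^'k \<Rightarrow> real) \<Rightarrow> nat \<Rightarrow> 'x \<Rightarrow> 'k \<Rightarrow> real" where
  "classifier_kernel h a x i = h x a (axis i 1)"

locale bayes_classification =
  fixes m :: nat and \<mu> :: "('x::polish_space \<times> (real^'k) \<times> nat) measure"
    and f :: "'x \<Rightarrow> nat \<Rightarrow> real^'k"
  assumes classification_problem: "classification_problem m \<mu>"
    and bayes_regressor: "bayes_regressor m \<mu> f"
begin

lemma sets_\<mu>: "sets \<mu> = sets (triple_space m)"
  using classification_problem by (simp add: classification_problem_def)

lemma space_\<mu>: "space \<mu> = UNIV \<times> labels \<times> {1..m}"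
  using sets_eq_imp_space_eq[OF sets_\<mu>] by (simp add: triple_space_def space_pair_measure)

sublocale \<mu>: prob_space \<mu>
  using classification_problem by (simp add: classification_problem_def)

lemma measurable_\<mu>: "measurable \<mu> N = measurable (triple_space m) N"
  by (rule measurable_cong_sets[OF sets_\<mu> refl])

lemma measurable_X[measurable]: "fst \<in> measurable \<mu> borel"
  unfolding measurable_\<mu> triple_space_def by measurable

lemma measurable_Y[measurable]: "(\<lambda>\<omega>. fst (snd \<omega>)) \<in> measurable \<mu> (count_space labels)"
  unfolding measurable_\<mu> triple_space_def by measurable

lemma measurable_A[measurable]: "(\<lambda>\<omega>. snd (snd \<omega>)) \<in> measurable \<mu> (count_space {1..m})"
  unfolding measurable_\<mu> triple_space_def by measurable

lemma measurable_XA[measurable]: "(\<lambda>\<omega>. (fst \<omega>, snd (snd \<omega>))) \<in> measurable \<mu> (features_groups m)"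
  by measurable

lemma borel_measurable_regressor[measurable]: "(\<lambda>(x, a). f x a) \<in> borel_measurable (features_groups m)"
  using bayes_regressor by (simp add: bayes_regressor_def)

lemma integrable_regressor: "integrable \<mu> (\<lambda>\<omega>. f (fst \<omega>) (snd (snd \<omega>)))"
  using bayes_regressor by (simp add: bayes_regressor_def case_prod_unfold)

lemma borel_measurable_Y_nth[measurable]: "(\<lambda>\<omega>. fst (snd \<omega>) $ i) \<in> borel_measurable \<mu>"
  using measurable_compose[OF measurable_Y, of "\<lambda>y. y $ i" borel] by simp

lemma Y_in_labels: "\<omega> \<in> space \<mu> \<Longrightarrow> fst (snd \<omega>) \<in> labels"
  by (auto simp: space_\<mu>)

lemma Y_nth_bounds: "\<omega> \<in> space \<mu> \<Longrightarrow> 0 \<le> fst (snd \<omega>) $ i \<and> fst (snd \<omega>) $ i \<le> 1"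
  using Y_in_labels[of \<omega>] by (auto simp: labels_iff axis_def)

lemma sum_Y: "\<omega> \<in> space \<mu> \<Longrightarrow> (\<Sum>i\<in>UNIV. fst (snd \<omega>) $ i) = 1"
  using Y_in_labels[of \<omega>] by (auto simp: labels_iff axis_def)

lemma integrable_bounded:
  fixes g :: "_ \<Rightarrow> real"
  assumes "g \<in> borel_measurable \<mu>" "\<And>\<omega>. \<omega> \<in> space \<mu> \<Longrightarrow> \<bar>g \<omega>\<bar> \<le> B"
  shows "integrable \<mu> g"
  by (rule \<mu>.integrable_const_bound[where B=B]) (use assms in auto)

lemma integrable_mult_regressor:
  assumes "g \<in> borel_measurable \<mu>" "\<And>\<omega>. \<omega> \<in> space \<mu> \<Longrightarrow> \<bar>g \<omega>\<bar> \<le> 1"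
  shows "integrable \<mu> (\<lambda>\<omega>. g \<omega> * f (fst \<omega>) (snd (snd \<omega>)) $ i)"
proof (rule Bochner_Integration.integrable_bound[OF integrable_regressor])
  show "(\<lambda>\<omega>. g \<omega> * f (fst \<omega>) (snd (snd \<omega>)) $ i) \<in> borel_measurable \<mu>"
    using assms(1) by measurable
  show "AE \<omega> in \<mu>. norm (g \<omega> * f (fst \<omega>) (snd (snd \<omega>)) $ i) \<le> norm (f (fst \<omega>) (snd (snd \<omega>)))"
  proof (rule AE_I2)
    fix \<omega> assume "\<omega> \<in> space \<mu>"
    then have "\<bar>g \<omega>\<bar> \<le> 1" by (rule assms(2))
    moreover have "\<bar>f (fst \<omega>) (snd (snd \<omega>)) $ i\<bar> \<le> norm (f (fst \<omega>) (snd (snd \<omega>)))"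
      by (rule component_le_norm_cart)
    ultimately show "norm (g \<omega> * f (fst \<omega>) (snd (snd \<omega>)) $ i) \<le> norm (f (fst \<omega>) (snd (snd \<omega>)))"
      using mult_mono[of "\<bar>g \<omega>\<bar>" 1 "\<bar>f (fst \<omega>) (snd (snd \<omega>)) $ i\<bar>" "norm (f (fst \<omega>) (snd (snd \<omega>)))"]
      by (simp add: abs_mult)
  qed
qed

lemma bayes_regressor_component:
  assumes C: "C \<in> sets (features_groups m)"
  shows "(\<integral>\<omega>. indicator C (fst \<omega>, snd (snd \<omega>)) * fst (snd \<omega>) $ i \<partial>\<mu>) =
         (\<integral>\<omega>. indicator C (fst \<omega>, snd (snd \<omega>)) * f (fst \<omega>) (snd (snd \<omega>)) $ i \<partial>\<mu>)"
proof -
  have [measurable]: "(\<lambda>\<omega>. fst (snd \<omega>)) \<in> borel_measurable \<mu>"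
    using measurable_compose[OF measurable_Y, of "\<lambda>y. y" borel] by simp
  have int_Y: "integrable \<mu> (\<lambda>\<omega>. indicator C (fst \<omega>, snd (snd \<omega>)) *\<^sub>R fst (snd \<omega>))"
  proof (rule \<mu>.integrable_const_bound[where B=1])
    show "AE \<omega> in \<mu>. norm (indicator C (fst \<omega>, snd (snd \<omega>)) *\<^sub>R fst (snd \<omega>)) \<le> 1"
    proof (rule AE_I2)
      fix \<omega> assume "\<omega> \<in> space \<mu>"
      then obtain j where "fst (snd \<omega>) = axis j 1" using Y_in_labels labels_iff by blast
      then show "norm (indicator C (fst \<omega>, snd (snd \<omega>)) *\<^sub>R fst (snd \<omega>)) \<le> 1"
        by (simp add: indicator_def)
    qed
  qed (use C in measurable)
  have int_f: "integrable \<mu> (\<lambda>\<omega>. indicator C (fst \<omega>, snd (snd \<omega>)) *\<^sub>R f (fst \<omega>) (snd (snd \<omega>)))"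
    by (rule Bochner_Integration.integrable_bound[OF integrable_regressor])
       (use C in \<open>measurable, auto simp: indicator_def\<close>)
  have "(\<integral>\<omega>. indicator C (fst \<omega>, snd (snd \<omega>)) *\<^sub>R fst (snd \<omega>) \<partial>\<mu>) =
      (\<integral>\<omega>. indicator C (fst \<omega>, snd (snd \<omega>)) *\<^sub>R f (fst \<omega>) (snd (snd \<omega>)) \<partial>\<mu>)"
    using bayes_regressor C by (simp add: bayes_regressor_def case_prod_unfold)
  then show ?thesis
    using integral_bounded_linear[OF bounded_linear_vec_nth int_Y, of i]
      integral_bounded_linear[OF bounded_linear_vec_nth int_f, of i]
    by simp
qed

lemma integrable_indicator_XA:
  "C \<in> sets (features_groups m) \<Longrightarrow> integrable \<mu> (\<lambda>\<omega>. indicator C (fst \<omega>, snd (snd \<omega>)) :: real)"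
  by (rule integrable_bounded[where B=1]) (auto simp: indicator_def)

lemma integrable_indicator_Y:
  "C \<in> sets (features_groups m) \<Longrightarrow>
    integrable \<mu> (\<lambda>\<omega>. indicator C (fst \<omega>, snd (snd \<omega>)) * fst (snd \<omega>) $ i)"
  by (rule integrable_bounded[where B=1]) (use Y_nth_bounds in \<open>auto simp: indicator_def abs_mult\<close>)

lemma integrable_indicator_regressor:
  "C \<in> sets (features_groups m) \<Longrightarrow>
    integrable \<mu> (\<lambda>\<omega>. indicator C (fst \<omega>, snd (snd \<omega>)) * f (fst \<omega>) (snd (snd \<omega>)) $ i)"
  by (rule integrable_mult_regressor) (auto simp: indicator_def)

lemma regressor_nonneg: "AE \<omega> in \<mu>. 0 \<le> f (fst \<omega>) (snd (snd \<omega>)) $ i"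
proof -
  have "AE \<omega> in \<mu>. 0 \<le> (\<lambda>(x, a). f x a $ i) (fst \<omega>, snd (snd \<omega>))"
  proof (rule AE_nonneg_if_set_integrals_nonneg[OF measurable_XA])
    show "integrable \<mu> (\<lambda>\<omega>. (\<lambda>(x, a). f x a $ i) (fst \<omega>, snd (snd \<omega>)))"
      using integrable_mult_regressor[of "\<lambda>_. 1"] by simp
    fix C :: "('x \<times> nat) set" assume C: "C \<in> sets (features_groups m)"
    have "0 \<le> (\<integral>\<omega>. indicator C (fst \<omega>, snd (snd \<omega>)) * fst (snd \<omega>) $ i \<partial>\<mu>)"
      by (rule Bochner_Integration.integral_nonneg) (use Y_nth_bounds in auto)
    then show "0 \<le> (\<integral>\<omega>. indicator C (fst \<omega>, snd (snd \<omega>)) *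
        (\<lambda>(x, a). f x a $ i) (fst \<omega>, snd (snd \<omega>)) \<partial>\<mu>)"
      unfolding bayes_regressor_component[OF C] by simp
  qed measurable
  then show ?thesis by simp
qed

lemma set_integral_regressor_sum:
  assumes C[measurable]: "C \<in> sets (features_groups m)"
  shows "(\<integral>\<omega>. indicator C (fst \<omega>, snd (snd \<omega>)) * ((\<Sum>i\<in>UNIV. f (fst \<omega>) (snd (snd \<omega>)) $ i) - 1) \<partial>\<mu>) = 0"
proof -
  let ?C = "\<lambda>\<omega>. indicator C (fst \<omega>, snd (snd \<omega>)) :: real"
  have "(\<integral>\<omega>. ?C \<omega> * ((\<Sum>i\<in>UNIV. f (fst \<omega>) (snd (snd \<omega>)) $ i) - 1) \<partial>\<mu>) =
      (\<integral>\<omega>. (\<Sum>i\<in>UNIV. ?C \<omega> * f (fst \<omega>) (snd (snd \<omega>)) $ i) - ?C \<omega> \<partial>\<mu>)"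
    by (simp add: algebra_simps sum_distrib_left)
  also have "\<dots> = (\<Sum>i\<in>UNIV. \<integral>\<omega>. ?C \<omega> * f (fst \<omega>) (snd (snd \<omega>)) $ i \<partial>\<mu>) - integral\<^sup>L \<mu> ?C"
    by (simp only: Bochner_Integration.integral_diff[OF Bochner_Integration.integrable_sum
          [OF integrable_indicator_regressor[OF C]] integrable_indicator_XA[OF C]]
        Bochner_Integration.integral_sum[OF integrable_indicator_regressor[OF C]])
  also have "\<dots> = (\<Sum>i\<in>UNIV. \<integral>\<omega>. ?C \<omega> * fst (snd \<omega>) $ i \<partial>\<mu>) - integral\<^sup>L \<mu> ?C"
    by (simp only: bayes_regressor_component[OF C])
  also have "\<dots> = (\<integral>\<omega>. (\<Sum>i\<in>UNIV. ?C \<omega> * fst (snd \<omega>) $ i) - ?C \<omega> \<partial>\<mu>)"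
    by (simp only: Bochner_Integration.integral_diff[OF Bochner_Integration.integrable_sum
          [OF integrable_indicator_Y[OF C]] integrable_indicator_XA[OF C]]
        Bochner_Integration.integral_sum[OF integrable_indicator_Y[OF C]])
  also have "\<dots> = 0"
    by (subst Bochner_Integration.integral_cong[OF refl, where g="\<lambda>_. 0"])
       (auto simp: sum_Y simp flip: sum_distrib_left)
  finally show ?thesis .
qed

lemma regressor_sum: "AE \<omega> in \<mu>. (\<Sum>i\<in>UNIV. f (fst \<omega>) (snd (snd \<omega>)) $ i) = 1"
proof -
  define u where "u c z = c * ((\<Sum>i\<in>UNIV. (case z of (x, a) \<Rightarrow> f x a) $ i) - 1)" for c :: real and z
  have AE_u: "AE \<omega> in \<mu>. 0 \<le> u c (fst \<omega>, snd (snd \<omega>))" for c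
  proof (rule AE_nonneg_if_set_integrals_nonneg[OF measurable_XA])
    have "integrable \<mu> (\<lambda>\<omega>. f (fst \<omega>) (snd (snd \<omega>)) $ i)" for i
      using integrable_mult_regressor[of "\<lambda>_. 1" i] by simp
    then show "integrable \<mu> (\<lambda>\<omega>. u c (fst \<omega>, snd (snd \<omega>)))"
      unfolding u_def prod.case by (intro Bochner_Integration.integrable_mult_right
        Bochner_Integration.integrable_diff Bochner_Integration.integrable_sum) auto
    fix C :: "('x \<times> nat) set" assume "C \<in> sets (features_groups m)"
    then show "0 \<le> (\<integral>\<omega>. indicator C (fst \<omega>, snd (snd \<omega>)) * u c (fst \<omega>, snd (snd \<omega>)) \<partial>\<mu>)"
      using set_integral_regressor_sum[of C] by (simp add: u_def mult.left_commute)
  qed (unfold u_def, measurable)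
  show ?thesis
    using AE_u[of 1] AE_u[of "-1"] by eventually_elim (simp add: u_def)
qed

lemma regressor_in_prob_simplex: "AE \<omega> in \<mu>. f (fst \<omega>) (snd (snd \<omega>)) \<in> prob_simplex"
proof -
  have "AE \<omega> in \<mu>. \<forall>i. 0 \<le> f (fst \<omega>) (snd (snd \<omega>)) $ i"
    by (subst AE_all_countable) (simp add: regressor_nonneg)
  then show ?thesis using regressor_sum by eventually_elim (simp add: prob_simplex_def)
qed

text \<open>The pushforwards to \<open>(X, A)\<close> of \<open>\<mu>\<close> weighted by \<open>Y$i\<close> and by \<open>f(X, A)$i\<close> agree on every
  measurable set, which is the defining property of the Bayes regressor. Equality of the two
  measures then extends that property from indicators to all integrable functions of \<open>(X, A)\<close>.\<close>
lemma distr_density_label_eq_regressor: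
  "distr (density \<mu> (\<lambda>\<omega>. ennreal (fst (snd \<omega>) $ i))) (features_groups m) (\<lambda>\<omega>. (fst \<omega>, snd (snd \<omega>))) =
   distr (density \<mu> (\<lambda>\<omega>. ennreal (f (fst \<omega>) (snd (snd \<omega>)) $ i))) (features_groups m)
     (\<lambda>\<omega>. (fst \<omega>, snd (snd \<omega>)))"
  (is "distr ?Y _ ?XA = distr ?F _ _")
proof (rule measure_eqI)
  fix C assume "C \<in> sets (distr ?Y (features_groups m) ?XA)"
  then have C[measurable]: "C \<in> sets (features_groups m)" by (simp only: sets_distr)
  have pre: "?XA -` C \<inter> space \<mu> \<in> sets \<mu>" using measurable_sets[OF measurable_XA C] .
  have weighted: "emeasure (distr (density \<mu> (\<lambda>\<omega>. ennreal (w \<omega>))) (features_groups m) ?XA) C =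
      (\<integral>\<^sup>+\<omega>. ennreal (indicator C (?XA \<omega>) * w \<omega>) \<partial>\<mu>)"
    if [measurable]: "w \<in> borel_measurable \<mu>" for w
  proof -
    have "emeasure (distr (density \<mu> (\<lambda>\<omega>. ennreal (w \<omega>))) (features_groups m) ?XA) C =
        emeasure (density \<mu> (\<lambda>\<omega>. ennreal (w \<omega>))) (?XA -` C \<inter> space \<mu>)"
      by (subst emeasure_distr) (simp_all only: measurable_density_eq1 measurable_XA C space_density)
    also have "\<dots> = (\<integral>\<^sup>+\<omega>. ennreal (w \<omega>) * indicator (?XA -` C \<inter> space \<mu>) \<omega> \<partial>\<mu>)"
      by (intro emeasure_density pre) measurable
    also have "\<dots> = (\<integral>\<^sup>+\<omega>. ennreal (indicator C (?XA \<omega>) * w \<omega>) \<partial>\<mu>)"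
      by (intro nn_integral_cong) (auto simp: indicator_def)
    finally show ?thesis .
  qed
  have "emeasure (distr ?Y (features_groups m) ?XA) C =
      (\<integral>\<^sup>+\<omega>. ennreal (indicator C (?XA \<omega>) * fst (snd \<omega>) $ i) \<partial>\<mu>)"
    by (rule weighted) measurable
  also have "\<dots> = ennreal (\<integral>\<omega>. indicator C (?XA \<omega>) * fst (snd \<omega>) $ i \<partial>\<mu>)"
    by (rule nn_integral_eq_integral[OF integrable_indicator_Y[OF C]]) (use Y_nth_bounds in auto)
  also have "\<dots> = ennreal (\<integral>\<omega>. indicator C (?XA \<omega>) * f (fst \<omega>) (snd (snd \<omega>)) $ i \<partial>\<mu>)"
    by (simp only: bayes_regressor_component[OF C])
  also have "\<dots> = (\<integral>\<^sup>+\<omega>. ennreal (indicator C (?XA \<omega>) * f (fst \<omega>) (snd (snd \<omega>)) $ i) \<partial>\<mu>)"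
    by (rule nn_integral_eq_integral[symmetric, OF integrable_indicator_regressor[OF C]])
       (use regressor_nonneg[of i] in \<open>auto simp: indicator_def\<close>)
  also have "\<dots> = emeasure (distr ?F (features_groups m) ?XA) C"
    by (rule weighted[symmetric]) measurable
  finally show "emeasure (distr ?Y (features_groups m) ?XA) C = emeasure (distr ?F (features_groups m) ?XA) C" .
qed (simp only: sets_distr)

lemma bayes_regressor_integral:
  assumes g[measurable]: "g \<in> borel_measurable (features_groups m)"
  shows "(\<integral>\<omega>. g (fst \<omega>, snd (snd \<omega>)) * fst (snd \<omega>) $ i \<partial>\<mu>) =
         (\<integral>\<omega>. g (fst \<omega>, snd (snd \<omega>)) * f (fst \<omega>) (snd (snd \<omega>)) $ i \<partial>\<mu>)"
proof -
  let ?XA = "\<lambda>\<omega>. (fst \<omega>, snd (snd \<omega>))"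
  define F where "F = density \<mu> (\<lambda>\<omega>. ennreal (f (fst \<omega>) (snd (snd \<omega>)) $ i))"
  have "(\<integral>\<omega>. g (?XA \<omega>) * fst (snd \<omega>) $ i \<partial>\<mu>) =
      integral\<^sup>L (density \<mu> (\<lambda>\<omega>. ennreal (fst (snd \<omega>) $ i))) (\<lambda>\<omega>. g (?XA \<omega>))"
    by (subst integral_density) (use Y_nth_bounds in \<open>auto simp: mult.commute\<close>)
  also have "\<dots> = integral\<^sup>L (distr (density \<mu> (\<lambda>\<omega>. ennreal (fst (snd \<omega>) $ i))) (features_groups m) ?XA) g"
    by (rule integral_distr[symmetric]) (simp_all only: measurable_density_eq1 measurable_XA g)
  also have "\<dots> = integral\<^sup>L (distr F (features_groups m) ?XA) g"
    by (simp only: distr_density_label_eq_regressor F_def)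
  also have "\<dots> = integral\<^sup>L F (\<lambda>\<omega>. g (?XA \<omega>))"
    by (rule integral_distr) (simp_all only: F_def measurable_density_eq1 measurable_XA g)
  also have "\<dots> = (\<integral>\<omega>. g (?XA \<omega>) * f (fst \<omega>) (snd (snd \<omega>)) $ i \<partial>\<mu>)"
    unfolding F_def using regressor_nonneg[of i]
    by (subst integral_density) (auto simp: mult.commute)
  finally show ?thesis .
qed

definition group_prob :: "nat \<Rightarrow> real" where
  "group_prob a = measure \<mu> {\<omega>\<in>space \<mu>. snd (snd \<omega>) = a}"

lemma group_prob_pos: "a \<in> {1..m} \<Longrightarrow> 0 < group_prob a"
  using classification_problem by (simp add: classification_problem_def group_prob_def)

lemma cond_measure_eq_density:
  "cond_measure \<mu> a = density \<mu> (\<lambda>\<omega>. ennreal (of_bool (snd (snd \<omega>) = a) / group_prob a))"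
  by (simp add: cond_measure_def group_prob_def indicator_def)

lemma integral_cond_measure:
  fixes \<phi> :: "_ \<Rightarrow> real"
  assumes a: "a \<in> {1..m}" and [measurable]: "\<phi> \<in> borel_measurable \<mu>"
  shows "integral\<^sup>L (cond_measure \<mu> a) \<phi> = (\<integral>\<omega>. of_bool (snd (snd \<omega>) = a) * \<phi> \<omega> \<partial>\<mu>) / group_prob a"
  unfolding cond_measure_eq_density using group_prob_pos[OF a]
  by (subst integral_density) (auto simp: field_simps)

lemma prob_space_cond_measure:
  assumes a: "a \<in> {1..m}"
  shows "prob_space (cond_measure \<mu> a)"
proof (rule prob_spaceI)
  have "(\<integral>\<omega>. of_bool (snd (snd \<omega>) = a) \<partial>\<mu>) = (\<integral>\<omega>. indicator {\<omega>\<in>space \<mu>. snd (snd \<omega>) = a} \<omega> \<partial>\<mu>)"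
    by (intro Bochner_Integration.integral_cong) (auto simp: indicator_def)
  also have "\<dots> = group_prob a" by (simp add: group_prob_def)
  finally have "(\<integral>\<omega>. of_bool (snd (snd \<omega>) = a) \<partial>\<mu>) = group_prob a" .
  then have "(\<integral>\<omega>. of_bool (snd (snd \<omega>) = a) / group_prob a \<partial>\<mu>) = 1"
    using group_prob_pos[OF a] by simp
  moreover have "integrable \<mu> (\<lambda>\<omega>. of_bool (snd (snd \<omega>) = a) / group_prob a)"
    using group_prob_pos[OF a] by (intro integrable_bounded[where B="1 / group_prob a"]) auto
  ultimately show "emeasure (cond_measure \<mu> a) (space (cond_measure \<mu> a)) = 1"
    unfolding cond_measure_eq_density using group_prob_pos[OF a]
    by (simp add: emeasure_density nn_integral_eq_integral)
qed

lemma measurable_X_law: "measurable (X_law \<mu> a) N = measurable borel N"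
  by (rule measurable_cong_sets) (simp_all add: X_law_def)

lemma prob_space_X_law: "a \<in> {1..m} \<Longrightarrow> prob_space (X_law \<mu> a)"
  unfolding X_law_def
  by (rule prob_space.prob_space_distr[OF prob_space_cond_measure]) (auto simp: cond_measure_def)

lemma integral_X_law:
  fixes \<phi> :: "_ \<Rightarrow> real"
  shows "\<phi> \<in> borel_measurable borel \<Longrightarrow>
    integral\<^sup>L (X_law \<mu> a) \<phi> = integral\<^sup>L (cond_measure \<mu> a) (\<lambda>\<omega>. \<phi> (fst \<omega>))"
  unfolding X_law_def by (rule integral_distr) (auto simp: cond_measure_def)

lemma borel_measurable_regressor_at: "a \<in> {1..m} \<Longrightarrow> (\<lambda>x. f x a) \<in> borel_measurable borel"
  using measurable_compose[OF measurable_Pair[OF measurable_ident_sets[OF refl] measurable_const]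
      borel_measurable_regressor, of a] by simp

lemma simplex_rv_X_law:
  assumes a: "a \<in> {1..m}"
  shows "simplex_rv (X_law \<mu> a) (\<lambda>x. f x a)"
proof -
  have [measurable]: "(\<lambda>x. f x a) \<in> borel_measurable borel"
    by (rule borel_measurable_regressor_at[OF a])
  have "AE \<omega> in cond_measure \<mu> a. f (fst \<omega>) a \<in> prob_simplex"
    unfolding cond_measure_eq_density
    by (subst AE_density) (use regressor_in_prob_simplex in auto)
  moreover have "{x. f x a \<in> prob_simplex} \<in> sets borel"
    using measurable_sets[OF borel_measurable_regressor_at[OF a] prob_simplex_borel] by (simp add: vimage_def)
  ultimately have "AE x in X_law \<mu> a. f x a \<in> prob_simplex"
    unfolding X_law_def by (subst AE_distr_iff) (auto simp: cond_measure_def)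
  then show ?thesis
    by (intro simplex_rv.intro prob_space_X_law[OF a]) (auto simp: simplex_rv_axioms_def measurable_X_law)
qed

lemma cond_integral_label_eq_regressor:
  assumes a: "a \<in> {1..m}" and g[measurable]: "\<And>i. g i \<in> borel_measurable borel"
    and g_bound: "\<And>i x. \<bar>g i x\<bar> \<le> 1"
  shows "integral\<^sup>L (cond_measure \<mu> a) (\<lambda>\<omega>. \<Sum>i\<in>UNIV. g i (fst \<omega>) * fst (snd \<omega>) $ i) =
    (\<integral>x. (\<Sum>i\<in>UNIV. g i x * f x a $ i) \<partial>X_law \<mu> a)"
proof -
  have [measurable]: "(\<lambda>x. f x a) \<in> borel_measurable borel"
    by (rule borel_measurable_regressor_at[OF a])
  define G where "G i = (\<lambda>(x, c). of_bool (c = a) * g i x)" for i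
  have [measurable]: "G i \<in> borel_measurable (features_groups m)" for i
  proof -
    have "(\<lambda>c. of_bool (c = a) :: real) \<circ> snd \<in> borel_measurable (features_groups m)"
      by (rule measurable_comp[OF measurable_snd]) simp
    moreover have "(\<lambda>z. g i (fst z)) \<in> borel_measurable (features_groups m)"
      using measurable_compose[OF measurable_fst g] by simp
    ultimately show ?thesis
      unfolding G_def case_prod_unfold comp_def by (rule borel_measurable_times)
  qed
  have G_bound: "\<bar>G i z\<bar> \<le> 1" for i z
    using g_bound[of i "fst z"] by (simp add: G_def case_prod_unfold abs_mult)
  have [measurable]: "(\<lambda>\<omega>. G i (fst \<omega>, snd (snd \<omega>))) \<in> borel_measurable \<mu>" for i
    using measurable_compose[OF measurable_XA] by simp
  have "(\<integral>\<omega>. of_bool (snd (snd \<omega>) = a) * (\<Sum>i\<in>UNIV. g i (fst \<omega>) * fst (snd \<omega>) $ i) \<partial>\<mu>) =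
      (\<Sum>i\<in>UNIV. \<integral>\<omega>. G i (fst \<omega>, snd (snd \<omega>)) * fst (snd \<omega>) $ i \<partial>\<mu>)"
  proof -
    have "integrable \<mu> (\<lambda>\<omega>. G i (fst \<omega>, snd (snd \<omega>)) * fst (snd \<omega>) $ i)" for i
      by (rule integrable_bounded[where B=1])
         (use G_bound Y_nth_bounds in \<open>auto simp: abs_mult intro: mult_le_one\<close>)
    then show ?thesis
      by (subst Bochner_Integration.integral_sum[symmetric])
         (auto simp: G_def sum_distrib_left mult.assoc intro!: Bochner_Integration.integral_cong)
  qed
  also have "\<dots> = (\<Sum>i\<in>UNIV. \<integral>\<omega>. G i (fst \<omega>, snd (snd \<omega>)) * f (fst \<omega>) (snd (snd \<omega>)) $ i \<partial>\<mu>)"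
    by (intro sum.cong refl bayes_regressor_integral) measurable
  also have "\<dots> = (\<integral>\<omega>. of_bool (snd (snd \<omega>) = a) * (\<Sum>i\<in>UNIV. g i (fst \<omega>) * f (fst \<omega>) a $ i) \<partial>\<mu>)"
  proof -
    have "integrable \<mu> (\<lambda>\<omega>. G i (fst \<omega>, snd (snd \<omega>)) * f (fst \<omega>) (snd (snd \<omega>)) $ i)" for i
      by (rule integrable_mult_regressor) (use G_bound in auto)
    then show ?thesis
      by (subst Bochner_Integration.integral_sum[symmetric])
         (auto simp: G_def sum_distrib_left mult.assoc intro!: Bochner_Integration.integral_cong)
  qed
  finally show ?thesis
    using integral_cond_measure[OF a] integral_X_law by simp
qed

lemma stochastic_kernel_classifier_kernel:
  assumes h: "randomized_classifier m h" and a: "a \<in> {1..m}"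
  shows "stochastic_kernel (X_law \<mu> a) (classifier_kernel h a)"
  unfolding stochastic_kernel_def
proof (intro conjI allI)
  have h: "\<forall>a\<in>{1..m}. \<forall>y\<in>labels. (\<lambda>x. h x a y) \<in> borel_measurable borel"
    "\<forall>x. \<forall>a\<in>{1..m}. \<forall>y\<in>labels. h x a y \<ge> 0" "\<forall>x. \<forall>a\<in>{1..m}. (\<Sum>y\<in>labels. h x a y) = 1"
    using h by (simp_all add: randomized_classifier_def)
  show "(\<lambda>x. classifier_kernel h a x i) \<in> borel_measurable (X_law \<mu> a)" for i
    unfolding measurable_X_law classifier_kernel_def using h(1) a axis_in_labels by blast
  show "0 \<le> classifier_kernel h a x i" for x i
    unfolding classifier_kernel_def using h(2) a axis_in_labels by blast
  show "(\<Sum>i\<in>UNIV. classifier_kernel h a x i) = 1" for x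
    unfolding classifier_kernel_def using h(3) a by (simp add: sum_labels)
qed

lemma pred_prob_eq_kernel_marginal:
  assumes h: "randomized_classifier m h" and a: "a \<in> {1..m}"
  shows "pred_prob \<mu> h a (axis i 1) = kernel_marginal (X_law \<mu> a) (classifier_kernel h a) $ i"
proof -
  have "(\<lambda>x. h x a (axis i 1)) \<in> borel_measurable borel"
    using h a by (auto simp: randomized_classifier_def axis_in_labels)
  from integral_X_law[OF this, of a] show ?thesis
    by (simp add: pred_prob_def kernel_marginal_def classifier_kernel_def case_prod_unfold)
qed

lemma Err_eq_one_minus_kernel_gain:
  assumes h: "randomized_classifier m h" and a: "a \<in> {1..m}"
  shows "Err \<mu> h a = 1 - kernel_gain (X_law \<mu> a) (\<lambda>x. f x a) (classifier_kernel h a)"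
proof -
  interpret cond: prob_space "cond_measure \<mu> a" by (rule prob_space_cond_measure[OF a])
  have H: "stochastic_kernel (X_law \<mu> a) (classifier_kernel h a)"
    by (rule stochastic_kernel_classifier_kernel[OF h a])
  have [measurable]: "(\<lambda>x. h x a (axis i 1)) \<in> borel_measurable borel" for i
    using H by (simp add: stochastic_kernel_def classifier_kernel_def measurable_X_law)
  have h_bound: "\<bar>h x a (axis i 1)\<bar> \<le> 1" for x i
    using H stochastic_kernel_le_1[OF H, of x i] by (auto simp: stochastic_kernel_def classifier_kernel_def)
  define agree where "agree \<omega> = (\<Sum>i\<in>UNIV. h (fst \<omega>) a (axis i 1) * fst (snd \<omega>) $ i)"
    for \<omega> :: "'x \<times> (real^'k) \<times> nat"
  have error: "(case \<omega> of (x, y, _) \<Rightarrow> \<Sum>y'\<in>labels - {y}. h x a y') = 1 - agree \<omega>"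
    if \<omega>: "\<omega> \<in> space \<mu>" for \<omega>
  proof -
    obtain j where j: "fst (snd \<omega>) = axis j 1" using Y_in_labels[OF \<omega>] labels_iff by blast
    have "agree \<omega> = h (fst \<omega>) a (axis j 1)"
      by (simp add: agree_def j axis_def if_distrib cong: if_cong)
    moreover have "(\<Sum>y'\<in>labels. h (fst \<omega>) a y') = 1"
      using H by (simp add: sum_labels stochastic_kernel_def classifier_kernel_def)
    ultimately show ?thesis
      using j by (simp add: case_prod_unfold sum_diff1 finite_labels axis_in_labels)
  qed
  have "integrable (cond_measure \<mu> a) agree"
  proof (rule cond.integrable_const_bound[where B=1])
    show "AE \<omega> in cond_measure \<mu> a. norm (agree \<omega>) \<le> 1"
    proof (rule AE_I2)
      fix \<omega> assume "\<omega> \<in> space (cond_measure \<mu> a)"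
      then have "\<omega> \<in> space \<mu>" by (simp add: cond_measure_def)
      then obtain j where j: "fst (snd \<omega>) = axis j 1"
        using Y_in_labels labels_iff by blast
      show "norm (agree \<omega>) \<le> 1" using h_bound by (simp add: agree_def j axis_def if_distrib cong: if_cong)
    qed
  qed (unfold agree_def, simp add: cond_measure_def, measurable)
  moreover have "Err \<mu> h a = (\<integral>\<omega>. 1 - agree \<omega> \<partial>cond_measure \<mu> a)"
    unfolding Err_def using error by (intro Bochner_Integration.integral_cong) (auto simp: cond_measure_def)
  ultimately have "Err \<mu> h a = 1 - integral\<^sup>L (cond_measure \<mu> a) agree"
    by (simp add: cond.prob_space)
  also have "integral\<^sup>L (cond_measure \<mu> a) agree =
      kernel_gain (X_law \<mu> a) (\<lambda>x. f x a) (classifier_kernel h a)"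
    unfolding agree_def kernel_gain_def classifier_kernel_def
    by (rule cond_integral_label_eq_regressor[OF a _ h_bound]) measurable
  finally show ?thesis .
qed

end

section \<open>Demographic parity\<close>

lemma the_is_min: "is_min S v \<Longrightarrow> (THE c. is_min S c) = v"
  by (rule the_equality) (auto simp: is_min_def intro: order.antisym)

context bayes_classification
begin

definition total_dual_value :: "real^'k \<Rightarrow> real" where
  "total_dual_value q = (\<Sum>a\<in>{1..m}. dual_value (X_law \<mu> a) (\<lambda>x. f x a) q)"

lemma total_dual_value_attains_max:
  obtains q where "q \<in> prob_simplex" "\<And>q'. q' \<in> prob_simplex \<Longrightarrow> total_dual_value q' \<le> total_dual_value q"
proof -
  have "total_dual_value q \<le> total_dual_value q' + real m * (\<Sum>i\<in>UNIV. \<bar>q$i - q'$i\<bar>)"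
    if "q \<in> prob_simplex" "q' \<in> prob_simplex" for q q'
  proof -
    have "total_dual_value q \<le>
        (\<Sum>a\<in>{1..m}. dual_value (X_law \<mu> a) (\<lambda>x. f x a) q' + (\<Sum>i\<in>UNIV. \<bar>q$i - q'$i\<bar>))"
      unfolding total_dual_value_def
      using simplex_rv.dual_value_lipschitz[OF simplex_rv_X_law that] by (intro sum_mono)
    then show ?thesis by (simp add: total_dual_value_def sum.distrib)
  qed
  then have lipschitz: "\<bar>total_dual_value q - total_dual_value q'\<bar> \<le> real m * (\<Sum>i\<in>UNIV. \<bar>q$i - q'$i\<bar>)"
    if "q \<in> prob_simplex" "q' \<in> prob_simplex" for q q'
    using that by (fastforce simp: abs_le_iff abs_minus_commute)
  have "continuous_on prob_simplex total_dual_value"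
    by (rule l1_lipschitz_imp_continuous_on[OF lipschitz]) auto
  then show ?thesis
    using continuous_attains_sup[OF compact_prob_simplex] uniform_in_prob_simplex that by blast
qed

lemma sum_W1_eq:
  assumes "q \<in> Qk"
  shows "(\<Sum>a\<in>{1..m}. W1 (distr (X_law \<mu> a) borel (\<lambda>x. f x a)) q) =
    2 * (real m - total_dual_value (label_weights q))"
proof -
  have "(\<Sum>a\<in>{1..m}. W1 (distr (X_law \<mu> a) borel (\<lambda>x. f x a)) q) =
      (\<Sum>a\<in>{1..m}. 2 - 2 * dual_value (X_law \<mu> a) (\<lambda>x. f x a) (label_weights q))"
    using simplex_rv.min_transport_cost(2)[OF simplex_rv_X_law assms] by (intro sum.cong) auto
  then show ?thesis
    by (simp add: total_dual_value_def sum_subtractf sum_distrib_left algebra_simps)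
qed

text \<open>A demographic parity classifier has the same label law \<open>q\<close> in every group, so its total
  error is at least \<open>m - total_dual_value q\<close>; conversely the kernels attaining the dual values
  at a common \<open>q\<close> define a demographic parity classifier with exactly this error.\<close>
lemma sum_Err_ge:
  assumes "m \<ge> 1" and h: "randomized_classifier m h" and dp: "demographic_parity m \<mu> h"
  obtains q where "q \<in> prob_simplex" "real m - total_dual_value q \<le> (\<Sum>a\<in>{1..m}. Err \<mu> h a)"
proof -
  have one: "1 \<in> {1..m}" using assms(1) by simp
  define q where "q = kernel_marginal (X_law \<mu> 1) (classifier_kernel h 1)"
  have q: "q \<in> prob_simplex"
    unfolding q_def
    by (rule simplex_rv.kernel_marginal_in_prob_simplex[OF simplex_rv_X_law[OF one]
          stochastic_kernel_classifier_kernel[OF h one]])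
  have "kernel_marginal (X_law \<mu> a) (classifier_kernel h a) = q" if a: "a \<in> {1..m}" for a
  proof -
    have "pred_prob \<mu> h a (axis i 1) = pred_prob \<mu> h 1 (axis i 1)" for i
      using dp a one axis_in_labels unfolding demographic_parity_def by blast
    then show ?thesis
      using pred_prob_eq_kernel_marginal[OF h a] pred_prob_eq_kernel_marginal[OF h one]
      by (simp add: q_def vec_eq_iff)
  qed
  then have "1 - dual_value (X_law \<mu> a) (\<lambda>x. f x a) q \<le> Err \<mu> h a" if "a \<in> {1..m}" for a
    using simplex_rv.kernel_gain_le_dual_value[OF simplex_rv_X_law[OF that]
        stochastic_kernel_classifier_kernel[OF h that]] Err_eq_one_minus_kernel_gain[OF h that] that
    by simp
  then have "(\<Sum>a\<in>{1..m}. 1 - dual_value (X_law \<mu> a) (\<lambda>x. f x a) q) \<le> (\<Sum>a\<in>{1..m}. Err \<mu> h a)"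
    by (rule sum_mono)
  then show ?thesis
    using that[OF q] by (simp add: total_dual_value_def sum_subtractf)
qed

lemma demographic_parity_classifier_attaining:
  assumes q: "q \<in> prob_simplex"
  obtains h where "randomized_classifier m h" "demographic_parity m \<mu> h"
    "(\<Sum>a\<in>{1..m}. Err \<mu> h a) = real m - total_dual_value q"
proof -
  have "\<exists>H. stochastic_kernel (X_law \<mu> a) H \<and> kernel_marginal (X_law \<mu> a) H = q \<and>
      kernel_gain (X_law \<mu> a) (\<lambda>x. f x a) H = dual_value (X_law \<mu> a) (\<lambda>x. f x a) q"
    if "a \<in> {1..m}" for a
    using simplex_rv.dual_value_attained[OF simplex_rv_X_law[OF that] q] by metis
  then obtain H where H: "\<And>a. a \<in> {1..m} \<Longrightarrow> stochastic_kernel (X_law \<mu> a) (H a)"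
      "\<And>a. a \<in> {1..m} \<Longrightarrow> kernel_marginal (X_law \<mu> a) (H a) = q"
      "\<And>a. a \<in> {1..m} \<Longrightarrow> kernel_gain (X_law \<mu> a) (\<lambda>x. f x a) (H a) = dual_value (X_law \<mu> a) (\<lambda>x. f x a) q"
    by metis
  define h where "h x a y = (\<Sum>i\<in>UNIV. if axis i (1::real) = y then H a x i else 0)" for x a y
  have h_axis: "h x a (axis j 1) = H a x j" for x a j
    unfolding h_def by (simp add: axis_eq_axis)
  have kernel: "classifier_kernel h a = H a" for a
    by (simp add: classifier_kernel_def h_axis fun_eq_iff)
  have h: "randomized_classifier m h"
    unfolding randomized_classifier_def
  proof (intro conjI ballI allI)
    fix a y assume a: "a \<in> {1..m}"
    have [measurable]: "(\<lambda>x. H a x i) \<in> borel_measurable borel" for i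
      using H(1)[OF a] by (simp add: stochastic_kernel_def measurable_X_law)
    show "(\<lambda>x. h x a y) \<in> borel_measurable borel" unfolding h_def by measurable
    show "0 \<le> h x a y" for x
      using H(1)[OF a] unfolding h_def by (intro sum_nonneg) (auto simp: stochastic_kernel_def)
    show "(\<Sum>y\<in>labels. h x a y) = 1" for x
      using H(1)[OF a] by (simp add: sum_labels h_axis stochastic_kernel_def)
  qed
  moreover have "demographic_parity m \<mu> h"
    unfolding demographic_parity_def
    using pred_prob_eq_kernel_marginal[OF h] H(2) by (auto simp: labels_iff kernel)
  moreover have "(\<Sum>a\<in>{1..m}. Err \<mu> h a) = real m - total_dual_value q"
    using Err_eq_one_minus_kernel_gain[OF h] H(3)
    by (simp add: kernel total_dual_value_def sum_subtractf)
  ultimately show ?thesis using that by blast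
qed

lemma is_min_sum_Err:
  assumes "m \<ge> 1" and q: "q \<in> prob_simplex"
    and max: "\<And>q'. q' \<in> prob_simplex \<Longrightarrow> total_dual_value q' \<le> total_dual_value q"
  shows "is_min {\<Sum>a\<in>{1..m}. Err \<mu> h a | h. randomized_classifier m h \<and> demographic_parity m \<mu> h}
    (real m - total_dual_value q)"
  unfolding is_min_def
proof (intro conjI ballI)
  obtain h where "randomized_classifier m h" "demographic_parity m \<mu> h"
    "(\<Sum>a\<in>{1..m}. Err \<mu> h a) = real m - total_dual_value q"
    using demographic_parity_classifier_attaining[OF q] .
  then show "real m - total_dual_value q \<in>
      {\<Sum>a\<in>{1..m}. Err \<mu> h a | h. randomized_classifier m h \<and> demographic_parity m \<mu> h}"
    by (metis (mono_tags, lifting) mem_Collect_eq)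
next
  fix c assume "c \<in> {\<Sum>a\<in>{1..m}. Err \<mu> h a | h. randomized_classifier m h \<and> demographic_parity m \<mu> h}"
  then obtain h where c: "c = (\<Sum>a\<in>{1..m}. Err \<mu> h a)"
    and "randomized_classifier m h" "demographic_parity m \<mu> h" by blast
  then obtain p where "p \<in> prob_simplex" "real m - total_dual_value p \<le> c"
    using sum_Err_ge[OF assms(1)] by metis
  then show "real m - total_dual_value q \<le> c" using max[of p] by linarith
qed

lemma is_min_sum_W1:
  assumes q: "q \<in> prob_simplex"
    and max: "\<And>q'. q' \<in> prob_simplex \<Longrightarrow> total_dual_value q' \<le> total_dual_value q"
  shows "is_min {\<Sum>a\<in>{1..m}. W1 (distr (X_law \<mu> a) borel (\<lambda>x. f x a)) q' | q'. q' \<in> Qk}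
    (2 * (real m - total_dual_value q))"
  unfolding is_min_def
proof (intro conjI ballI)
  show "2 * (real m - total_dual_value q) \<in>
      {\<Sum>a\<in>{1..m}. W1 (distr (X_law \<mu> a) borel (\<lambda>x. f x a)) q' | q'. q' \<in> Qk}"
    using sum_W1_eq[OF label_measure_in_Qk[OF q]] label_measure_in_Qk[OF q]
    unfolding label_weights_label_measure[OF q] by (intro CollectI exI[of _ "label_measure q"]) simp
next
  fix c assume "c \<in> {\<Sum>a\<in>{1..m}. W1 (distr (X_law \<mu> a) borel (\<lambda>x. f x a)) q' | q'. q' \<in> Qk}"
  then obtain q' where "q' \<in> Qk" "c = 2 * (real m - total_dual_value (label_weights q'))"
    using sum_W1_eq by auto
  then show "2 * (real m - total_dual_value q) \<le> c"
    using max[OF Qk_eq_label_measure(1)] by simp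
qed

end

theorem theorem3p1:
  fixes m :: nat
    and \<mu> :: "('x::polish_space \<times> (real^'k) \<times> nat) measure"
    and f :: "'x \<Rightarrow> nat \<Rightarrow> (real^'k)"
  assumes "CARD('k) \<ge> 2"
    and "m \<ge> 1"
    and "classification_problem m \<mu>"
    and "bayes_regressor m \<mu> f"
  defines "r \<equiv> (\<lambda>a. distr (X_law \<mu> a) borel (\<lambda>x. f x a))"
  shows "\<exists>V.
     is_min {\<Sum>a\<in>{1..m}. Err \<mu> h a | h. randomized_classifier m h \<and> demographic_parity m \<mu> h} V \<and>
     is_min {\<Sum>a\<in>{1..m}. W1 (r a) q | q. q \<in> Qk} (2 * V) \<and>
     (\<forall>q\<in>Qk. \<forall>a\<in>{1..m}. is_min (transport_cost ` couplings (r a) q) (W1 (r a) q)) \<and>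
     is_min {\<Sum>a\<in>{1..m}. (THE c. is_min (transport_cost ` couplings (r a) q) c) | q. q \<in> Qk} (2 * V)"
proof -
  interpret bayes_classification m \<mu> f using assms(3,4) by unfold_locales
  obtain q where q: "q \<in> prob_simplex" "\<And>q'. q' \<in> prob_simplex \<Longrightarrow> total_dual_value q' \<le> total_dual_value q"
    using total_dual_value_attains_max by blast
  define V where "V = real m - total_dual_value q"
  have W1_min: "is_min (transport_cost ` couplings (r a) q') (W1 (r a) q')" if "q' \<in> Qk" "a \<in> {1..m}" for q' a
    using simplex_rv.min_transport_cost[OF simplex_rv_X_law[OF that(2)] that(1)] by (simp add: r_def)
  have "(\<Sum>a\<in>{1..m}. (THE c. is_min (transport_cost ` couplings (r a) q') c)) = (\<Sum>a\<in>{1..m}. W1 (r a) q')"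
    if "q' \<in> Qk" for q'
    using the_is_min[OF W1_min[OF that]] by (intro sum.cong refl)
  then have "{\<Sum>a\<in>{1..m}. (THE c. is_min (transport_cost ` couplings (r a) q') c) | q'. q' \<in> Qk} =
      {\<Sum>a\<in>{1..m}. W1 (r a) q' | q'. q' \<in> Qk}"
    by (intro Collect_cong) metis
  then show ?thesis
    using is_min_sum_Err[OF assms(2) q] is_min_sum_W1[OF q] W1_min
    by (intro exI[of _ V]) (simp add: V_def r_def)
qed

end
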